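(* Let $\Lambda = \{\lambda_1, \lambda_2, \ldots, \lambda_n\}$ be a list of complex numbers such that $\lambda_1 \in \mathbb{R}$, $\lambda_1 \geq |\lambda_j|$ for $j = 2, \ldots, n$, $\sum_{j=1}^n \lambda_j \geq 0$ and $\overline{\Lambda} = \Lambda$. Let $S \leq n$ be a positive integer and let $\omega_1, \ldots, \omega_S$ be numbers with $0 \leq \omega_k \leq \lambda_1$ for $k = 1, \ldots, S$. Suppose that (1) there is a partition $\Lambda = \Lambda_1 \cup \cdots \cup \Lambda_S$, where $\Lambda_j = \{\lambda_{j1}, \lambda_{j2}, \ldots, \lambda_{jp_j}\}$ for $j = 1, \ldots, S$ and $\lambda_{11} = \lambda_1$, such that at most one of the lists $\Lambda_j$ has odd size, and for each $j = 1, \ldots, S$ the list $\Gamma_j = \{\omega_j, \lambda_{j2}, \ldots, \lambda_{jp_j}\}$ is realizable by a normal centrosymmetric nonnegative matrix with Perron root $\omega_j$; and (2) there is an $S \times S$ normal nonnegative matrix $B$ whose eigenvalues are $\lambda_{11}, \lambda_{21}, \ldots, \lambda_{S1}$ and whose diagonal entries are $\omega_S, \omega_{S-1}, \ldots, \omega_1$ (in this order). Then $\{\lambda_1, \lambda_2, \ldots, \lambda_n\}$ is realizable by a normal centrosymmetric nonnegative matrix.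
   Context: Lists are multisets (repetitions allowed); $\overline{\Lambda}$ is the list of complex conjugates. A list of $k$ complex numbers is realizable by a matrix $A$ if $A$ is a $k \times k$ matrix whose eigenvalues (with multiplicity) are exactly the numbers in the list. A real matrix is nonnegative if all its entries are nonnegative; the Perron root of a nonnegative matrix is its spectral radius, which is an eigenvalue. $J$ denotes the reverse identity matrix of the appropriate size; a square matrix $A$ is centrosymmetric if $JAJ = A$; $A$ is normal if $AA^* = A^*A$. *)

theory Defs
  imports "Jordan_Normal_Form.Spectral_Radius"
begin

definition realizes :: "complex list \<Rightarrow> real mat \<Rightarrow> bool" where
  "realizes L A \<longleftrightarrow> A \<in> carrier_mat (length L) (length L) \<and>
     char_poly (map_mat complex_of_real A) = (\<Prod>a\<leftarrow>L. [:- a, 1:])"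

definition nonneg_mat :: "real mat \<Rightarrow> bool" where
  "nonneg_mat A \<longleftrightarrow> (\<forall>i<dim_row A. \<forall>j<dim_col A. A $$ (i, j) \<ge> 0)"

text \<open>For a real matrix, the conjugate transpose is the transpose.\<close>
definition normal_mat :: "real mat \<Rightarrow> bool" where
  "normal_mat A \<longleftrightarrow> A * transpose_mat A = transpose_mat A * A"

definition rev_id :: "nat \<Rightarrow> real mat" where
  "rev_id n = mat n n (\<lambda>(i, j). if i + j = n - 1 then 1 else 0)"

definition centrosymmetric :: "real mat \<Rightarrow> bool" where
  "centrosymmetric A \<longleftrightarrow> rev_id (dim_row A) * A * rev_id (dim_row A) = A"

definition perron_root :: "real mat \<Rightarrow> real" where
  "perron_root A = spectral_radius (map_mat complex_of_real A)"

definition NCN_realizable :: "complex list \<Rightarrow> bool" where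
  "NCN_realizable L \<longleftrightarrow> (\<exists>A. realizes L A \<and> normal_mat A \<and> centrosymmetric A \<and> nonneg_mat A)"

end

theory Submission
  imports Defs
begin

(*
  For a normal
  matrix |A v| <= rho(A) |v|, so the entrywise absolute value of an eigenvector for w_j is again one;
  normality makes it an eigenvector of the transpose as well, and adding its reversal makes it
  symmetric. This gives unit vectors u_j >= 0 with A_j u_j = A_j^T u_j = w_j u_j and Ju_j = u_j.

  The glued matrix C = diag(A_1, ..., A_S) + U (B - Omega) U^T, where U has the columns u_j and
  Omega = diag(w_j), is nonnegative because B - Omega has zero diagonal, and it is normal. Conjugating
  by diag(W_1, ..., W_S), W_j the reflection exchanging e_1 and u_j, turns each A_j into w_j (+) A_j'
  and C into a matrix permutation similar to B (+) A_1' (+) ... (+) A_S', so the spectrum of C is the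
  spectrum of B together with the lists Lambda_j without their first entries. Finally, placing the
  first halves of all blocks at the front, their mirror images at the back and the middle entry of
  the (at most one) odd block in the centre makes C centrosymmetric.
*)

section \<open>Characteristic polynomials and block matrices\<close>

lemma realizes_iff_char_poly:
  "realizes L A \<longleftrightarrow> A \<in> carrier_mat (length L) (length L) \<and>
     map_poly complex_of_real (char_poly A) = (\<Prod>a\<leftarrow>L. [:- a, 1:])"
proof -
  have "A \<in> carrier_mat n n \<Longrightarrow>
      char_poly (map_mat complex_of_real A) = map_poly complex_of_real (char_poly A)" for n
    by (rule of_real_hom.char_poly_hom)
  then show ?thesis
    unfolding realizes_def by auto
qed

lemma char_poly_matrix_index:
  "X \<in> carrier_mat k k \<Longrightarrow> i < k \<Longrightarrow> j < k \<Longrightarrow>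
    char_poly_matrix X $$ (i, j) = (if i = j then [:0, 1:] else 0) + [:- X $$ (i, j):]"
  by (simp add: char_poly_matrix_def)

lemma char_poly_four_block_diag:
  fixes A :: "'a :: idom mat"
  assumes A: "A \<in> carrier_mat n n" and D: "D \<in> carrier_mat m m"
  shows "char_poly (four_block_mat A (0\<^sub>m n m) (0\<^sub>m m n) D) = char_poly A * char_poly D"
proof -
  let ?F = "four_block_mat A (0\<^sub>m n m) (0\<^sub>m m n) D"
  have F: "?F \<in> carrier_mat (n + m) (n + m)" using A D by auto
  have cA: "char_poly_matrix A \<in> carrier_mat n n" and cD: "char_poly_matrix D \<in> carrier_mat m m"
    using A D by auto
  have cF: "char_poly_matrix ?F \<in> carrier_mat (n + m) (n + m)"
    using F by simp
  let ?G = "four_block_mat (char_poly_matrix A) (0\<^sub>m n m) (0\<^sub>m m n) (char_poly_matrix D)"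
  have cpm: "char_poly_matrix ?F = ?G"
  proof (rule eq_matI)
    fix i j assume "i < dim_row ?G" "j < dim_col ?G"
    then have ij: "i < n + m" "j < n + m" using cA cD by auto
    show "char_poly_matrix ?F $$ (i, j) = ?G $$ (i, j)"
      unfolding char_poly_matrix_index[OF F ij]
      using ij A D cA cD
      by (cases "i < n"; cases "j < n")
        (auto simp: char_poly_matrix_index[OF A] char_poly_matrix_index[OF D]
          carrier_matD[OF cA] carrier_matD[OF cD])
  qed (use cA cD cF in auto)
  have det: "det ?G = det (char_poly_matrix A) * det (char_poly_matrix D)"
    by (rule det_four_block_mat_upper_right_zero) (use A D in auto)
  show ?thesis
    unfolding char_poly_def cpm det ..
qed

lemma char_poly_diag_block_mat:
  fixes As :: "'a :: idom mat list"
  assumes "\<And>A. A \<in> set As \<Longrightarrow> square_mat A"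
  shows "char_poly (diag_block_mat As) = (\<Prod>A\<leftarrow>As. char_poly A)"
  using assms
proof (induction As)
  case Nil
  show ?case
    using char_poly_upper_triangular[of "0\<^sub>m 0 0 :: 'a mat" 0]
    by (simp add: upper_triangular_def diag_mat_def)
next
  case (Cons A As)
  let ?D = "diag_block_mat As"
  have A: "A \<in> carrier_mat (dim_row A) (dim_row A)" and D: "?D \<in> carrier_mat (dim_row ?D) (dim_row ?D)"
    using Cons.prems diag_block_mat_square[of As] by auto
  have "char_poly (diag_block_mat (A # As)) = char_poly A * char_poly ?D"
    using char_poly_four_block_diag[OF A D] carrier_matD[OF A] carrier_matD[OF D] by (simp add: Let_def)
  then show ?case
    using Cons.IH Cons.prems by simp
qed

lemma char_poly_1x1: "char_poly (mat 1 1 (\<lambda>_. a)) = [:- a, 1:]"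
  using char_poly_upper_triangular[of "mat 1 1 (\<lambda>_. a)" 1]
  by (simp add: upper_triangular_def diag_mat_def)

lemma four_block_diag_eq_iff:
  assumes "A \<in> carrier_mat n n" "D \<in> carrier_mat m m" "A' \<in> carrier_mat n n" "D' \<in> carrier_mat m m"
  shows "four_block_mat A (0\<^sub>m n m) (0\<^sub>m m n) D = four_block_mat A' (0\<^sub>m n m) (0\<^sub>m m n) D'
    \<longleftrightarrow> A = A' \<and> D = D'"
proof
  assume eq: "four_block_mat A (0\<^sub>m n m) (0\<^sub>m m n) D = four_block_mat A' (0\<^sub>m n m) (0\<^sub>m m n) D'"
  have "A $$ (i, j) = A' $$ (i, j)" if "i < n" "j < n" for i j
    using arg_cong[OF eq, of "\<lambda>M. M $$ (i, j)"] that assms by auto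
  moreover have "D $$ (i, j) = D' $$ (i, j)" if "i < m" "j < m" for i j
    using arg_cong[OF eq, of "\<lambda>M. M $$ (i + n, j + n)"] that assms by auto
  ultimately show "A = A' \<and> D = D'"
    using assms by (auto intro!: eq_matI)
qed simp

lemma normal_four_block_diag_iff:
  assumes A: "A \<in> carrier_mat n n" and D: "D \<in> carrier_mat m m"
  shows "normal_mat (four_block_mat A (0\<^sub>m n m) (0\<^sub>m m n) D) \<longleftrightarrow> normal_mat A \<and> normal_mat D"
proof -
  have AT: "transpose_mat A \<in> carrier_mat n n" and DT: "transpose_mat D \<in> carrier_mat m m"
    using A D by auto
  have mult: "four_block_mat X (0\<^sub>m n m) (0\<^sub>m m n) Y * four_block_mat X' (0\<^sub>m n m) (0\<^sub>m m n) Y'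
      = four_block_mat (X * X') (0\<^sub>m n m) (0\<^sub>m m n) (Y * Y')"
    if "X \<in> carrier_mat n n" "Y \<in> carrier_mat m m" "X' \<in> carrier_mat n n" "Y' \<in> carrier_mat m m"
    for X Y X' Y' :: "real mat"
    using that by (subst mult_four_block_mat[OF that(1) _ _ that(2) that(3) _ _ that(4)]) auto
  have transpose: "transpose_mat (four_block_mat A (0\<^sub>m n m) (0\<^sub>m m n) D)
      = four_block_mat (transpose_mat A) (0\<^sub>m n m) (0\<^sub>m m n) (transpose_mat D)"
    using transpose_four_block_mat[OF A _ _ D] by auto
  show ?thesis
    unfolding normal_mat_def transpose mult[OF A D AT DT] mult[OF AT DT A D]
    by (subst four_block_diag_eq_iff) (use A D in auto)
qed

lemma normal_diag_block_mat:
  assumes "\<And>A. A \<in> set As \<Longrightarrow> square_mat A \<and> normal_mat A"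
  shows "normal_mat (diag_block_mat As)"
  using assms
proof (induction As)
  case Nil
  show ?case by (simp add: normal_mat_def)
next
  case (Cons A As)
  let ?D = "diag_block_mat As"
  have A: "A \<in> carrier_mat (dim_row A) (dim_row A)" and D: "?D \<in> carrier_mat (dim_row ?D) (dim_row ?D)"
    using Cons.prems diag_block_mat_square[of As] by auto
  have "normal_mat (diag_block_mat (A # As)) \<longleftrightarrow> normal_mat A \<and> normal_mat ?D"
    using normal_four_block_diag_iff[OF A D] carrier_matD[OF A] carrier_matD[OF D] by (simp add: Let_def)
  then show ?case
    using Cons.IH Cons.prems by simp
qed

lemma diag_block_mat_index:
  assumes "\<And>A. A \<in> set As \<Longrightarrow> square_mat A"
    and "j < length As" "a < dim_row (As ! j)" "k < length As" "b < dim_row (As ! k)"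
  shows "diag_block_mat As $$ (sum_list (map dim_row (take j As)) + a, sum_list (map dim_row (take k As)) + b)
    = (if j = k then As ! j $$ (a, b) else 0)"
  using assms
proof (induction As arbitrary: j k)
  case (Cons A As)
  let ?D = "diag_block_mat As"
  have sq: "dim_col A = dim_row A" "dim_col ?D = dim_row ?D"
    using Cons.prems(1) diag_block_mat_square[of As] by auto
  have bound: "sum_list (map dim_row (take i As)) + c < dim_row ?D"
    if "i < length As" "c < dim_row (As ! i)" for i c
  proof -
    have "sum_list (map dim_row (take i As)) + c < sum_list (map dim_row (take (Suc i) As))"
      using that by (simp add: take_Suc_conv_app_nth)
    also have "\<dots> \<le> sum_list (map dim_row As)"
      by (metis append_take_drop_id le_add1 map_append sum_list_append)
    finally show ?thesis by (simp add: dim_diag_block_mat)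
  qed
  show ?case
  proof (cases j)
    case 0
    then show ?thesis
      using Cons.prems bound by (cases k) (simp_all add: Let_def sq)
  next
    case (Suc j')
    then show ?thesis
      using Cons.prems Cons.IH[of j'] bound by (cases k) (simp_all add: Let_def sq)
  qed
qed simp
lemma normal_mat_conjugate:
  assumes P: "P \<in> carrier_mat n n" and Y: "Y \<in> carrier_mat n n"
    and PP: "P * P = 1\<^sub>m n" and PT: "transpose_mat P = P" and N: "normal_mat Y"
  shows "normal_mat (P * Y * P)"
proof -
  have conj_mult: "(P * X * P) * (P * Z * P) = P * (X * Z) * P"
    if "X \<in> carrier_mat n n" "Z \<in> carrier_mat n n" for X Z
  proof -
    have "(P * X * P) * (P * Z * P) = P * X * (P * P) * Z * P"
      using P that by (simp add: assoc_mult_mat[of _ n n _ n _ n])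
    then show ?thesis
      unfolding PP using P that by (simp add: assoc_mult_mat[of _ n n _ n _ n])
  qed
  have "transpose_mat (P * Y * P) = transpose_mat P * (transpose_mat Y * transpose_mat P)"
    using P Y by (simp add: transpose_mult[of _ n n _ n])
  also have "\<dots> = P * transpose_mat Y * P"
    using P Y PT by (simp add: assoc_mult_mat[of _ n n _ n _ n])
  finally have "transpose_mat (P * Y * P) = P * transpose_mat Y * P" .
  then show ?thesis
    using N Y unfolding normal_mat_def by (simp add: conj_mult)
qed

lemma rev_id_conjugate_index:
  assumes X: "X \<in> carrier_mat n n" and i: "i < n" and k: "k < n"
  shows "(rev_id n * X * rev_id n) $$ (i, k) = X $$ (n - 1 - i, n - 1 - k)"
proof -
  have "(rev_id n * X) $$ (i, l) = X $$ (n - 1 - i, l)" if "l < n" for l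
  proof -
    have "(rev_id n * X) $$ (i, l) = (\<Sum>m = 0..<n. (if i + m = n - 1 then 1 else 0) * X $$ (m, l))"
      using i that X by (auto simp: rev_id_def scalar_prod_def)
    also have "\<dots> = (\<Sum>m = 0..<n. (if m = n - 1 - i then X $$ (m, l) else 0))"
      using i by (intro sum.cong) auto
    finally show ?thesis using i by simp
  qed
  then have "(rev_id n * X * rev_id n) $$ (i, k)
      = (\<Sum>l = 0..<n. X $$ (n - 1 - i, l) * (if l + k = n - 1 then 1 else 0))"
    using i k X by (auto simp: rev_id_def scalar_prod_def intro!: sum.cong)
  also have "\<dots> = (\<Sum>l = 0..<n. (if l = n - 1 - k then X $$ (n - 1 - i, l) else 0))"
    using k by (intro sum.cong) auto
  finally show ?thesis using k by simp
qed

lemma centrosymmetric_index: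
  assumes "centrosymmetric X" "X \<in> carrier_mat n n" "i < n" "k < n"
  shows "X $$ (n - 1 - i, n - 1 - k) = X $$ (i, k)"
proof -
  have "X $$ (i, k) = (rev_id n * X * rev_id n) $$ (i, k)"
    using assms(1,2) unfolding centrosymmetric_def by auto
  then show ?thesis
    using rev_id_conjugate_index assms(2-) by simp
qed

lemma prod_mset_image_sum:
  "finite J \<Longrightarrow> prod_mset (image_mset f (\<Sum>j\<in>J. X j)) = (\<Prod>j\<in>J. prod_mset (image_mset f (X j)))"
  by (induction J rule: finite_induct) auto

lemma realizes_Cons_eigenvalue:
  assumes "realizes (complex_of_real w # L) A"
  shows "eigenvalue A w"
proof -
  have A: "A \<in> carrier_mat (Suc (length L)) (Suc (length L))"
    and cp: "map_poly complex_of_real (char_poly A) = [:- complex_of_real w, 1:] * (\<Prod>a\<leftarrow>L. [:- a, 1:])"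
    using assms unfolding realizes_iff_char_poly by auto
  have "complex_of_real (poly (char_poly A) w) = poly (map_poly complex_of_real (char_poly A)) (complex_of_real w)"
    by (simp add: of_real_hom.poly_map_poly)
  also have "\<dots> = 0" unfolding cp by simp
  finally show ?thesis using eigenvalue_root_char_poly[OF A] by simp
qed

section \<open>Matrices labelled by a finite set\<close>

definition labelled_mat :: "nat \<Rightarrow> (nat \<Rightarrow> 'i) \<Rightarrow> ('i \<Rightarrow> 'i \<Rightarrow> 'a) \<Rightarrow> 'a mat" where
  "labelled_mat n d F = mat n n (\<lambda>(i, k). F (d i) (d k))"

lemma labelled_mat_carrier [simp]:
  "labelled_mat n d F \<in> carrier_mat n n"
  "dim_row (labelled_mat n d F) = n" "dim_col (labelled_mat n d F) = n"
  unfolding labelled_mat_def by auto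

lemma index_labelled_mat [simp]:
  "i < n \<Longrightarrow> k < n \<Longrightarrow> labelled_mat n d F $$ (i, k) = F (d i) (d k)"
  unfolding labelled_mat_def by auto

lemma transpose_labelled_mat: "transpose_mat (labelled_mat n d F) = labelled_mat n d (\<lambda>x y. F y x)"
  unfolding labelled_mat_def by (rule eq_matI) auto

lemma labelled_mat_eq_iff:
  assumes "bij_betw d {..<n} X"
  shows "labelled_mat n d F = labelled_mat n d G \<longleftrightarrow> (\<forall>x\<in>X. \<forall>y\<in>X. F x y = G x y)"
proof
  assume eq: "labelled_mat n d F = labelled_mat n d G"
  show "\<forall>x\<in>X. \<forall>y\<in>X. F x y = G x y"
  proof (intro ballI)
    fix x y assume "x \<in> X" "y \<in> X"
    then obtain i k where "i < n" "k < n" "x = d i" "y = d k"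
      using bij_betw_imp_surj_on[OF assms] by auto
    then show "F x y = G x y"
      using arg_cong[OF eq, of "\<lambda>M. M $$ (i, k)"] by simp
  qed
next
  assume FG: "\<forall>x\<in>X. \<forall>y\<in>X. F x y = G x y"
  have "d i \<in> X" if "i < n" for i
    using bij_betw_apply[OF assms] that by simp
  with FG show "labelled_mat n d F = labelled_mat n d G"
    by (intro eq_matI) auto
qed

lemma mult_labelled_mat:
  assumes "bij_betw d {..<n} X"
  shows "labelled_mat n d F * labelled_mat n d G = labelled_mat n d (\<lambda>x y. \<Sum>z\<in>X. F x z * G z y)"
proof (rule eq_matI)
  fix i k assume "i < dim_row (labelled_mat n d (\<lambda>x y. \<Sum>z\<in>X. F x z * G z y))"
    "k < dim_col (labelled_mat n d (\<lambda>x y. \<Sum>z\<in>X. F x z * G z y))"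
  then have "i < n" "k < n" by auto
  then show "(labelled_mat n d F * labelled_mat n d G) $$ (i, k)
      = labelled_mat n d (\<lambda>x y. \<Sum>z\<in>X. F x z * G z y) $$ (i, k)"
    using sum.reindex_bij_betw[OF assms, of "\<lambda>z. F (d i) z * G z (d k)"]
    by (simp add: scalar_prod_def atLeast0LessThan)
qed auto

lemma sum_bij_betw_lessThan:
  fixes e :: "nat \<Rightarrow> 'i"
  assumes "bij_betw e {..<n} X"
  shows "(\<Sum>l = 0..<n. g (e l)) = (\<Sum>z\<in>X. g z)"
  using sum.reindex_bij_betw[OF assms, of g] unfolding atLeast0LessThan by simp

definition matching_mat :: "nat \<Rightarrow> (nat \<Rightarrow> 'i) \<Rightarrow> (nat \<Rightarrow> 'i) \<Rightarrow> 'a :: semiring_1 mat" where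
  "matching_mat n d e = mat n n (\<lambda>(i, k). if d i = e k then 1 else 0)"

lemma matching_mat_mult:
  assumes d: "bij_betw d {..<n} X" and e: "bij_betw e {..<n} X"
  shows "matching_mat n d e * matching_mat n e d = (1\<^sub>m n :: 'a :: semiring_1 mat)"
proof (rule eq_matI)
  fix i k assume "i < dim_row (1\<^sub>m n :: 'a mat)" "k < dim_col (1\<^sub>m n :: 'a mat)"
  then have ik: "i < n" "k < n" by auto
  have "(matching_mat n d e * matching_mat n e d :: 'a mat) $$ (i, k)
      = (\<Sum>l = 0..<n. (if e l = d i then (if e l = d k then 1 else 0) else 0))"
    using ik by (auto simp: matching_mat_def scalar_prod_def intro!: sum.cong)
  also have "\<dots> = (1\<^sub>m n :: 'a mat) $$ (i, k)"
    unfolding sum_bij_betw_lessThan[OF e, of "\<lambda>z. if z = d i then (if z = d k then 1 else 0) else 0"]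
    using bij_betw_finite[OF d] bij_betw_apply[OF d] d ik by (auto simp: sum.delta bij_betw_def inj_on_def)
  finally show "(matching_mat n d e * matching_mat n e d :: 'a mat) $$ (i, k) = (1\<^sub>m n :: 'a mat) $$ (i, k)" .
qed (auto simp: matching_mat_def)

lemma matching_mat_conjugate_labelled:
  fixes F :: "'i \<Rightarrow> 'i \<Rightarrow> 'a :: comm_ring_1"
  assumes d: "bij_betw d {..<n} X" and e: "bij_betw e {..<n} X"
  shows "matching_mat n d e * labelled_mat n e F * matching_mat n e d = labelled_mat n d F"
proof (rule eq_matI)
  have fin: "finite X" using bij_betw_finite[OF d] by simp
  have d_in: "d i \<in> X" if "i < n" for i using bij_betw_apply[OF d] that by simp
  fix i k assume "i < dim_row (labelled_mat n d F)" "k < dim_col (labelled_mat n d F)"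
  then have ik: "i < n" "k < n" by auto
  have left: "(matching_mat n d e * labelled_mat n e F) $$ (i, l) = F (d i) (e l)" if "l < n" for l
  proof -
    have "(matching_mat n d e * labelled_mat n e F) $$ (i, l)
        = (\<Sum>m = 0..<n. (if d i = e m then F (e m) (e l) else 0))"
      using ik that by (auto simp: matching_mat_def scalar_prod_def intro!: sum.cong)
    then show ?thesis
      unfolding sum_bij_betw_lessThan[OF e, of "\<lambda>z. if d i = z then F z (e l) else 0"]
      using fin d_in ik by (simp add: sum.delta')
  qed
  have "(matching_mat n d e * labelled_mat n e F * matching_mat n e d) $$ (i, k)
      = (\<Sum>l = 0..<n. (if e l = d k then F (d i) (e l) else 0))"
    using ik left by (auto simp: matching_mat_def scalar_prod_def intro!: sum.cong)
  also have "\<dots> = F (d i) (d k)"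
    unfolding sum_bij_betw_lessThan[OF e, of "\<lambda>z. if z = d k then F (d i) z else 0"]
    using fin d_in ik by (simp add: sum.delta)
  finally show "(matching_mat n d e * labelled_mat n e F * matching_mat n e d) $$ (i, k)
      = labelled_mat n d F $$ (i, k)"
    using ik by simp
qed (auto simp: matching_mat_def)

lemma similar_labelled_mat:
  fixes F :: "'i \<Rightarrow> 'i \<Rightarrow> 'a :: comm_ring_1"
  assumes d: "bij_betw d {..<n} X" and e: "bij_betw e {..<n} X"
  shows "similar_mat (labelled_mat n d F) (labelled_mat n e F)"
  by (rule similar_matI[of _ _ "matching_mat n d e" "matching_mat n e d" n])
    (use matching_mat_mult[OF d e] matching_mat_mult[OF e d] matching_mat_conjugate_labelled[OF d e, of F, symmetric] in
      \<open>auto simp: matching_mat_def\<close>)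

lemma normal_labelled_mat_iff:
  fixes F :: "'i \<Rightarrow> 'i \<Rightarrow> real"
  assumes "bij_betw d {..<n} X"
  shows "normal_mat (labelled_mat n d F) \<longleftrightarrow>
    (\<forall>x\<in>X. \<forall>y\<in>X. (\<Sum>z\<in>X. F x z * F y z) = (\<Sum>z\<in>X. F z x * F z y))"
  unfolding normal_mat_def transpose_labelled_mat mult_labelled_mat[OF assms]
    labelled_mat_eq_iff[OF assms] ..

lemma centrosymmetric_labelled_mat:
  assumes "\<And>i. i < n \<Longrightarrow> d (n - 1 - i) = \<sigma> (d i)"
    and "\<And>i k. i < n \<Longrightarrow> k < n \<Longrightarrow> F (\<sigma> (d i)) (\<sigma> (d k)) = F (d i) (d k)"
  shows "centrosymmetric (labelled_mat n d F)"
  unfolding centrosymmetric_def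
proof (rule eq_matI)
  fix i k assume "i < dim_row (labelled_mat n d F)" "k < dim_col (labelled_mat n d F)"
  then have ik: "i < n" "k < n" by auto
  then show "(rev_id (dim_row (labelled_mat n d F)) * labelled_mat n d F * rev_id (dim_row (labelled_mat n d F))) $$ (i, k)
      = labelled_mat n d F $$ (i, k)"
    using rev_id_conjugate_index[OF labelled_mat_carrier(1)[of n d F] ik]
      assms(1)[OF ik(1)] assms(1)[OF ik(2)] assms(2)[OF ik] by simp
qed (auto simp: rev_id_def)

section \<open>Reflections\<close>

definition reflector :: "nat \<Rightarrow> real vec \<Rightarrow> real mat" where
  "reflector n u = (let v = unit_vec n 0 + u in
     mat n n (\<lambda>(i, k). v $ i * v $ k / (1 + u $ 0) - (if i = k then 1 else 0)))"

lemma reflector_carrier [simp]: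
  "reflector n u \<in> carrier_mat n n" "dim_row (reflector n u) = n" "dim_col (reflector n u) = n"
  unfolding reflector_def Let_def by auto

lemma transpose_reflector: "transpose_mat (reflector n u) = reflector n u"
  unfolding reflector_def Let_def by (rule eq_matI) auto

context
  fixes n :: nat and u :: "real vec"
  assumes n: "0 < n" and u: "u \<in> carrier_vec n" and u0: "0 \<le> u $ 0" and unit: "u \<bullet> u = 1"
begin

lemma col_reflector_0: "col (reflector n u) 0 = u"
  using n u u0 by (intro eq_vecI) (auto simp: reflector_def Let_def field_simps)

lemma reflector_involution: "reflector n u * reflector n u = 1\<^sub>m n"
proof (rule eq_matI)
  define v where "v = unit_vec n 0 + u"
  define h where "h = 1 + u $ 0"
  have h: "h > 0" using u0 by (simp add: h_def)
  have vv: "(\<Sum>l = 0..<n. v $ l * v $ l) = 2 * h"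
  proof -
    have "(\<Sum>l = 0..<n. v $ l * v $ l) = (\<Sum>l = 0..<n. (if l = 0 then 1 + 2 * u $ 0 else 0) + u $ l * u $ l)"
      using u by (intro sum.cong) (auto simp: v_def algebra_simps)
    also have "\<dots> = 1 + 2 * u $ 0 + u \<bullet> u"
      using n u by (simp add: sum.distrib scalar_prod_def)
    finally show ?thesis using unit by (simp add: h_def)
  qed
  fix i k assume "i < dim_row (1\<^sub>m n :: real mat)" "k < dim_col (1\<^sub>m n :: real mat)"
  then have i: "i < n" and k: "k < n" by auto
  have "(reflector n u * reflector n u) $$ (i, k)
      = (\<Sum>l = 0..<n. (v $ i * v $ l / h - (if i = l then 1 else 0)) * (v $ l * v $ k / h - (if l = k then 1 else 0)))"
    using i k u by (simp add: reflector_def Let_def scalar_prod_def v_def h_def)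
  also have "\<dots> = (\<Sum>l = 0..<n. v $ i * v $ k / (h * h) * (v $ l * v $ l)
      - (if i = l then v $ l * v $ k / h else 0) - (if l = k then v $ i * v $ l / h else 0)
      + (if i = l then (if l = k then 1 else 0) else 0))"
    using h by (intro sum.cong) (auto simp: field_simps)
  also have "\<dots> = v $ i * v $ k / (h * h) * (\<Sum>l = 0..<n. v $ l * v $ l)
      - 2 * (v $ i * v $ k / h) + (if i = k then 1 else 0)"
    using i k by (simp add: sum.distrib sum_subtractf sum_distrib_left sum.delta sum.delta')
  also have "\<dots> = (1\<^sub>m n :: real mat) $$ (i, k)"
    using i k h unfolding vv by (simp add: field_simps)
  finally show "(reflector n u * reflector n u) $$ (i, k) = (1\<^sub>m n :: real mat) $$ (i, k)" .
qed auto

lemma col_reflector_conjugate_0: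
  assumes A: "A \<in> carrier_mat n n" and eig: "A *\<^sub>v u = w \<cdot>\<^sub>v u"
  shows "col (reflector n u * A * reflector n u) 0 = w \<cdot>\<^sub>v unit_vec n 0"
proof -
  let ?W = "reflector n u"
  have W: "?W \<in> carrier_mat n n" by simp
  have "col (?W * A * ?W) 0 = (?W * A) *\<^sub>v col ?W 0"
    using W A n by (intro col_mult2) auto
  also have "\<dots> = w \<cdot>\<^sub>v (?W *\<^sub>v u)"
    unfolding col_reflector_0 assoc_mult_mat_vec[OF W A u] eig by (rule mult_mat_vec[OF W u])
  also have "?W *\<^sub>v u = col (?W * ?W) 0"
    using W n col_mult2[OF W W, of 0] by (simp add: col_reflector_0)
  finally show ?thesis
    unfolding reflector_involution using n by simp
qed

lemma reflector_conjugate_block: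
  assumes A: "A \<in> carrier_mat n n"
    and eig: "A *\<^sub>v u = w \<cdot>\<^sub>v u" and eig_T: "transpose_mat A *\<^sub>v u = w \<cdot>\<^sub>v u"
  defines "A' \<equiv> reflector n u * A * reflector n u"
  shows "A' = four_block_mat (mat 1 1 (\<lambda>_. w)) (0\<^sub>m 1 (n - 1)) (0\<^sub>m (n - 1) 1)
      (mat (n - 1) (n - 1) (\<lambda>(i, k). A' $$ (i + 1, k + 1)))"
proof -
  let ?W = "reflector n u"
  have W: "?W \<in> carrier_mat n n" by simp
  have A'_carrier: "A' \<in> carrier_mat n n"
    unfolding A'_def using A W by (meson mult_carrier_mat)
  have "transpose_mat A' = ?W * (transpose_mat A * ?W)"
    unfolding A'_def transpose_mult[OF mult_carrier_mat[OF W A] W] transpose_mult[OF W A]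
      transpose_reflector ..
  also have "\<dots> = ?W * transpose_mat A * ?W"
    using A W by (simp add: assoc_mult_mat[of _ n n _ n _ n])
  finally have "transpose_mat A' = ?W * transpose_mat A * ?W" .
  then have col_T: "col (transpose_mat A') 0 = w \<cdot>\<^sub>v unit_vec n 0"
    using col_reflector_conjugate_0[OF _ eig_T] A by simp
  have col_0: "col A' 0 = w \<cdot>\<^sub>v unit_vec n 0"
    unfolding A'_def by (rule col_reflector_conjugate_0[OF A eig])
  have first_col: "A' $$ (a, 0) = (if a = 0 then w else 0)" if "a < n" for a
    using arg_cong[OF col_0, of "\<lambda>v. v $ a"] that n A'_carrier by auto
  have first_row: "A' $$ (0, a) = (if a = 0 then w else 0)" if "a < n" for a
    using arg_cong[OF col_T, of "\<lambda>v. v $ a"] that n A'_carrier by auto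
  show ?thesis
  proof (rule eq_matI)
    fix i k assume "i < dim_row (four_block_mat (mat 1 1 (\<lambda>_. w)) (0\<^sub>m 1 (n - 1)) (0\<^sub>m (n - 1) 1)
      (mat (n - 1) (n - 1) (\<lambda>(i, k). A' $$ (i + 1, k + 1))))"
      "k < dim_col (four_block_mat (mat 1 1 (\<lambda>_. w)) (0\<^sub>m 1 (n - 1)) (0\<^sub>m (n - 1) 1)
      (mat (n - 1) (n - 1) (\<lambda>(i, k). A' $$ (i + 1, k + 1))))"
    then have "i < n" "k < n" using n by auto
    then show "A' $$ (i, k) = four_block_mat (mat 1 1 (\<lambda>_. w)) (0\<^sub>m 1 (n - 1)) (0\<^sub>m (n - 1) 1)
      (mat (n - 1) (n - 1) (\<lambda>(i, k). A' $$ (i + 1, k + 1))) $$ (i, k)"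
      using first_row first_col n by (cases "i = 0"; cases "k = 0") auto
  qed (use A'_carrier n in auto)
qed

end

section \<open>Norm estimates for normal matrices\<close>

lemma Cauchy_Schwarz_sum:
  fixes x y :: "'i \<Rightarrow> real"
  assumes fin: "finite I"
  shows "(\<Sum>i\<in>I. x i * y i)\<^sup>2 \<le> (\<Sum>i\<in>I. x i * x i) * (\<Sum>i\<in>I. y i * y i)"
proof -
  define a where "a = (\<Sum>i\<in>I. x i * x i)"
  define b where "b = (\<Sum>i\<in>I. x i * y i)"
  define c where "c = (\<Sum>i\<in>I. y i * y i)"
  have "0 \<le> (\<Sum>i\<in>I. (c * x i - b * y i)\<^sup>2)"
    by (intro sum_nonneg) auto
  also have "\<dots> = (\<Sum>i\<in>I. c * c * (x i * x i) - 2 * c * b * (x i * y i) + b * b * (y i * y i))"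
    by (rule sum.cong) (auto simp: power2_eq_square algebra_simps)
  also have "\<dots> = c * c * a - 2 * c * b * b + b * b * c"
    unfolding a_def b_def c_def by (simp add: sum.distrib sum_subtractf sum_distrib_left)
  finally have c_disc: "0 \<le> c * (a * c - b * b)"
    by (simp add: algebra_simps)
  show ?thesis
  proof (cases "c = 0")
    case True
    then have "y i = 0" if "i \<in> I" for i
      using sum_nonneg_eq_0_iff[OF fin, of "\<lambda>i. y i * y i"] that by (simp add: c_def)
    then show ?thesis
      by (simp add: sum_nonneg)
  next
    case False
    moreover have "0 \<le> c" unfolding c_def by (intro sum_nonneg) auto
    ultimately show ?thesis
      using c_disc by (simp add: a_def b_def c_def power2_eq_square zero_le_mult_iff)
  qed
qed

lemma scalar_prod_Cauchy_Schwarz: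
  fixes x y :: "real vec"
  assumes "x \<in> carrier_vec n" "y \<in> carrier_vec n"
  shows "(x \<bullet> y)\<^sup>2 \<le> (x \<bullet> x) * (y \<bullet> y)"
  using Cauchy_Schwarz_sum[of "{0..<n}" "\<lambda>i. x $ i" "\<lambda>i. y $ i"] assms
  by (simp add: scalar_prod_def)

lemma normal_mat_norm_transpose:
  fixes A :: "real mat"
  assumes A: "A \<in> carrier_mat n n" and N: "normal_mat A" and y: "y \<in> carrier_vec n"
  shows "(transpose_mat A *\<^sub>v y) \<bullet> (transpose_mat A *\<^sub>v y) = (A *\<^sub>v y) \<bullet> (A *\<^sub>v y)"
proof -
  have AT: "transpose_mat A \<in> carrier_mat n n" using A by simp
  have "(transpose_mat A *\<^sub>v y) \<bullet> (transpose_mat A *\<^sub>v y) = y \<bullet> (A *\<^sub>v (transpose_mat A *\<^sub>v y))"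
    by (rule transpose_vec_mult_scalar[OF A _ y]) (use AT y in simp)
  also have "A *\<^sub>v (transpose_mat A *\<^sub>v y) = (A * transpose_mat A) *\<^sub>v y"
    by (rule assoc_mult_mat_vec[OF A AT y, symmetric])
  also have "\<dots> = transpose_mat A *\<^sub>v (A *\<^sub>v y)"
    using N assoc_mult_mat_vec[OF AT A y] unfolding normal_mat_def by simp
  also have "y \<bullet> \<dots> = (transpose_mat A *\<^sub>v (A *\<^sub>v y)) \<bullet> y"
    by (rule comm_scalar_prod) (use AT A y in auto)
  also have "\<dots> = (A *\<^sub>v y) \<bullet> (A *\<^sub>v y)"
    by (rule transpose_vec_mult_scalar[OF A y]) (use A y in simp)
  finally show ?thesis .
qed

lemma normal_mat_norm_log_convex:
  fixes A :: "real mat"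
  assumes A: "A \<in> carrier_mat n n" and N: "normal_mat A" and x: "x \<in> carrier_vec n"
  shows "((A *\<^sub>v x) \<bullet> (A *\<^sub>v x))\<^sup>2 \<le> (x \<bullet> x) * ((A *\<^sub>v (A *\<^sub>v x)) \<bullet> (A *\<^sub>v (A *\<^sub>v x)))"
proof -
  have AT: "transpose_mat A \<in> carrier_mat n n" using A by simp
  have Ax: "A *\<^sub>v x \<in> carrier_vec n" using A x by simp
  have "(A *\<^sub>v x) \<bullet> (A *\<^sub>v x) = x \<bullet> (transpose_mat A *\<^sub>v (A *\<^sub>v x))"
    using transpose_vec_mult_scalar[OF AT Ax x] by simp
  then show ?thesis
    using scalar_prod_Cauchy_Schwarz[of x n "transpose_mat A *\<^sub>v (A *\<^sub>v x)"] x AT Ax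
      normal_mat_norm_transpose[OF A N Ax] by simp
qed

lemma spectral_radius_smult_le:
  assumes A: "A \<in> carrier_mat n n" and n: "0 < n" and c: "c \<noteq> 0"
  shows "spectral_radius (c \<cdot>\<^sub>m A) \<le> cmod c * spectral_radius A"
proof -
  have cA: "c \<cdot>\<^sub>m A \<in> carrier_mat n n" using A by simp
  obtain mu where mu: "mu \<in> spectrum (c \<cdot>\<^sub>m A)" and rad: "spectral_radius (c \<cdot>\<^sub>m A) = cmod mu"
    using spectral_radius_mem_max(1)[OF cA n] by auto
  then obtain v where v: "v \<in> carrier_vec n" "v \<noteq> 0\<^sub>v n" "(c \<cdot>\<^sub>m A) *\<^sub>v v = mu \<cdot>\<^sub>v v"
    using cA unfolding spectrum_def eigenvalue_def eigenvector_def by auto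
  have "A *\<^sub>v v = (mu / c) \<cdot>\<^sub>v v"
  proof (rule eq_vecI)
    fix i assume "i < dim_vec ((mu / c) \<cdot>\<^sub>v v)"
    then show "(A *\<^sub>v v) $ i = ((mu / c) \<cdot>\<^sub>v v) $ i"
      using arg_cong[OF v(3), of "\<lambda>w. w $ i"] A v(1) c
      by (auto simp: scalar_prod_def sum_distrib_left field_simps)
  qed (use A v in auto)
  then have "mu / c \<in> spectrum A"
    using A v unfolding spectrum_def eigenvalue_def eigenvector_def by auto
  then have "cmod (mu / c) \<le> spectral_radius A"
    using spectral_radius_mem_max(2)[OF A n] by auto
  then show ?thesis
    using c rad by (simp add: norm_divide field_simps)
qed

lemma pow_mat_smult:
  assumes X: "X \<in> carrier_mat n n"
  shows "(c \<cdot>\<^sub>m X) ^\<^sub>m k = (c ^ k) \<cdot>\<^sub>m (X ^\<^sub>m k :: 'a :: comm_semiring_1 mat)"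
proof (induction k)
  case 0
  show ?case using X by (auto intro!: eq_matI)
next
  case (Suc k)
  have "(c \<cdot>\<^sub>m X) ^\<^sub>m Suc k = (c ^ k \<cdot>\<^sub>m X ^\<^sub>m k) * (c \<cdot>\<^sub>m X)"
    using Suc.IH by simp
  also have "\<dots> = c ^ k \<cdot>\<^sub>m (X ^\<^sub>m k * (c \<cdot>\<^sub>m X))"
    by (rule mult_smult_assoc_mat) (use X in auto)
  also have "X ^\<^sub>m k * (c \<cdot>\<^sub>m X) = c \<cdot>\<^sub>m (X ^\<^sub>m k * X)"
    using X by (intro mult_smult_distrib) auto
  finally show ?case by (auto intro!: eq_matI simp: ac_simps)
qed

lemma perron_root_nonneg:
  assumes "A \<in> carrier_mat n n" and "0 < n"
  shows "0 \<le> perron_root A"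
  using spectral_radius_mem_max(1)[of "map_mat complex_of_real A" n] assms
  unfolding perron_root_def by auto

lemma perron_root_power_bound:
  fixes A :: "real mat"
  assumes A: "A \<in> carrier_mat n n" and n: "0 < n" and t: "perron_root A < t"
  shows "\<exists>c. \<forall>k i l. i < n \<longrightarrow> l < n \<longrightarrow> \<bar>(A ^\<^sub>m k) $$ (i, l)\<bar> \<le> c * t ^ k"
proof -
  let ?A = "map_mat complex_of_real A"
  let ?B = "complex_of_real (1 / t) \<cdot>\<^sub>m ?A"
  have t0: "0 < t" using perron_root_nonneg[OF A n] t by simp
  have "spectral_radius ?B \<le> 1 / t * perron_root A"
    using spectral_radius_smult_le[of ?A n "complex_of_real (1 / t)"] A n t0
    unfolding perron_root_def by (simp add: norm_divide)
  also have "\<dots> < 1" using t t0 by (simp add: field_simps)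
  finally obtain c where c: "\<And>k. norm_bound (?B ^\<^sub>m k) c"
    using spectral_radius_jnf_norm_bound_less_1_upper_triangular[of ?B n] A by auto
  have "\<bar>(A ^\<^sub>m k) $$ (i, l)\<bar> \<le> c * t ^ k" if "i < n" "l < n" for k i l
  proof -
    have "map_mat complex_of_real (A ^\<^sub>m k) = ?A ^\<^sub>m k"
      by (rule of_real_hom.mat_hom_pow[OF A])
    then have "?B ^\<^sub>m k = complex_of_real (1 / t) ^ k \<cdot>\<^sub>m map_mat complex_of_real (A ^\<^sub>m k)"
      using pow_mat_smult[of ?A n] A by simp
    then have "(?B ^\<^sub>m k) $$ (i, l) = (1 / complex_of_real t) ^ k * complex_of_real ((A ^\<^sub>m k) $$ (i, l))"
      using that A by simp
    moreover have "norm ((?B ^\<^sub>m k) $$ (i, l)) \<le> c"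
      using c[of k] that A unfolding norm_bound_def by auto
    ultimately have "(1 / t) ^ k * \<bar>(A ^\<^sub>m k) $$ (i, l)\<bar> \<le> c"
      using t0 by (simp add: norm_mult norm_power norm_divide)
    then show ?thesis
      using t0 by (simp add: field_simps)
  qed
  then show ?thesis by blast
qed

lemma funpow_mult_mat_vec:
  assumes A: "A \<in> carrier_mat n n" and v: "v \<in> carrier_vec n"
  shows "((\<lambda>x. A *\<^sub>v x) ^^ k) v = (A ^\<^sub>m k) *\<^sub>v v"
  using v
proof (induction k arbitrary: v)
  case (Suc k)
  have "((\<lambda>x. A *\<^sub>v x) ^^ Suc k) v = (A ^\<^sub>m k) *\<^sub>v (A *\<^sub>v v)"
    using Suc A by (simp only: funpow_Suc_right comp_def) simp
  also have "\<dots> = (A ^\<^sub>m k * A) *\<^sub>v v"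
    using A Suc.prems by (simp add: assoc_mult_mat_vec[of _ n n _ n])
  finally show ?case by simp
qed (use A in auto)

lemma norm_mult_mat_vec_le:
  fixes A :: "real mat"
  assumes A: "A \<in> carrier_mat n n" and v: "v \<in> carrier_vec n"
    and c: "\<And>i l. i < n \<Longrightarrow> l < n \<Longrightarrow> \<bar>A $$ (i, l)\<bar> \<le> c"
  shows "(A *\<^sub>v v) \<bullet> (A *\<^sub>v v) \<le> real n * (c * (\<Sum>l = 0..<n. \<bar>v $ l\<bar>))\<^sup>2"
proof -
  have row_bound: "\<bar>\<Sum>l = 0..<n. A $$ (i, l) * v $ l\<bar> \<le> c * (\<Sum>l = 0..<n. \<bar>v $ l\<bar>)" if "i < n" for i
  proof -
    have "\<bar>\<Sum>l = 0..<n. A $$ (i, l) * v $ l\<bar> \<le> (\<Sum>l = 0..<n. \<bar>A $$ (i, l)\<bar> * \<bar>v $ l\<bar>)"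
      using sum_abs[of "\<lambda>l. A $$ (i, l) * v $ l"] by (simp add: abs_mult)
    also have "\<dots> \<le> (\<Sum>l = 0..<n. c * \<bar>v $ l\<bar>)"
      using c that by (intro sum_mono mult_right_mono) auto
    finally show ?thesis by (simp add: sum_distrib_left)
  qed
  have "(A *\<^sub>v v) \<bullet> (A *\<^sub>v v) = (\<Sum>i = 0..<n. (\<Sum>l = 0..<n. A $$ (i, l) * v $ l)\<^sup>2)"
    using A v by (auto simp: scalar_prod_def mult_mat_vec_def power2_eq_square intro!: sum.cong)
  also have "\<dots> \<le> (\<Sum>i = 0..<n. (c * (\<Sum>l = 0..<n. \<bar>v $ l\<bar>))\<^sup>2)"
  proof (intro sum_mono)
    fix i assume "i \<in> {0..<n}"
    then have "\<bar>\<Sum>l = 0..<n. A $$ (i, l) * v $ l\<bar> \<le> \<bar>c * (\<Sum>l = 0..<n. \<bar>v $ l\<bar>)\<bar>"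
      using row_bound by fastforce
    then show "(\<Sum>l = 0..<n. A $$ (i, l) * v $ l)\<^sup>2 \<le> (c * (\<Sum>l = 0..<n. \<bar>v $ l\<bar>))\<^sup>2"
      by (simp only: abs_le_square_iff)
  qed
  finally show ?thesis by simp
qed

lemma log_convex_seq_lower_bound:
  fixes a :: "nat \<Rightarrow> real"
  assumes a0: "0 < a 0" and a1: "0 < a 1"
    and conv: "\<And>k. (a (Suc k))\<^sup>2 \<le> a k * a (Suc (Suc k))"
  shows "(a 1 / a 0) ^ k * a 0 \<le> a k"
proof -
  define q where "q = a 1 / a 0"
  have q: "0 < q" using a0 a1 by (simp add: q_def)
  have step: "0 < a k \<and> q * a k \<le> a (Suc k)" for k
  proof (induction k)
    case 0
    show ?case using a0 by (simp add: q_def)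
  next
    case (Suc k)
    then have pos: "0 < a (Suc k)"
      using q by (smt (verit) mult_pos_pos)
    have "a k * (q * a (Suc k)) \<le> a (Suc k) * a (Suc k)"
      using Suc.IH pos by (simp add: mult.left_commute mult_right_mono)
    also have "\<dots> \<le> a k * a (Suc (Suc k))"
      using conv[of k] by (simp add: power2_eq_square)
    finally show ?case
      using Suc.IH pos by (simp add: mult_le_cancel_left_pos)
  qed
  have "q ^ k * a 0 \<le> a k" for k
  proof (induction k)
    case (Suc k)
    then have "q ^ Suc k * a 0 \<le> q * a k"
      using q by (simp add: mult.assoc)
    also have "\<dots> \<le> a (Suc k)" using step[of k] by simp
    finally show ?case .
  qed simp
  then show ?thesis by (simp add: q_def)
qed

lemma perron_root_orbit_bound:
  fixes A :: "real mat"
  assumes A: "A \<in> carrier_mat n n" and n: "0 < n" and t: "perron_root A < t"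
    and v: "v \<in> carrier_vec n"
  shows "\<exists>K. \<forall>k. ((A ^\<^sub>m k) *\<^sub>v v) \<bullet> ((A ^\<^sub>m k) *\<^sub>v v) \<le> K * (t\<^sup>2) ^ k"
proof -
  obtain c where c: "\<And>k i l. i < n \<Longrightarrow> l < n \<Longrightarrow> \<bar>(A ^\<^sub>m k) $$ (i, l)\<bar> \<le> c * t ^ k"
    using perron_root_power_bound[OF A n t] by blast
  have "((A ^\<^sub>m k) *\<^sub>v v) \<bullet> ((A ^\<^sub>m k) *\<^sub>v v) \<le> real n * (c * t ^ k * (\<Sum>l = 0..<n. \<bar>v $ l\<bar>))\<^sup>2" for k
    using norm_mult_mat_vec_le[of "A ^\<^sub>m k" n v "c * t ^ k"] A v c by simp
  then show ?thesis
    by (intro exI[of _ "real n * (c * (\<Sum>l = 0..<n. \<bar>v $ l\<bar>))\<^sup>2"])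
      (simp add: power_mult_distrib power_mult[symmetric] mult_ac)
qed

lemma scalar_prod_self_nonneg:
  fixes x :: "real vec"
  shows "0 \<le> x \<bullet> x"
  by (auto simp: scalar_prod_def intro!: sum_nonneg)

text \<open>For a normal matrix the norms of the iterates A^k v are log-convex, so they grow at
  least like (|A v| / |v|)^k, whereas the spectral radius bounds their growth from above.\<close>
lemma normal_mat_norm_le_perron_root:
  fixes A :: "real mat"
  assumes A: "A \<in> carrier_mat n n" and N: "normal_mat A" and v: "v \<in> carrier_vec n"
  shows "(A *\<^sub>v v) \<bullet> (A *\<^sub>v v) \<le> (perron_root A)\<^sup>2 * (v \<bullet> v)"
proof (rule ccontr)
  define x where "x k = ((\<lambda>y. A *\<^sub>v y) ^^ k) v" for k
  define a where "a k = x k \<bullet> x k" for k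
  have x: "x k \<in> carrier_vec n" for k
    unfolding x_def funpow_mult_mat_vec[OF A v] using pow_carrier_mat[OF A] v by (rule mult_mat_vec_carrier)
  have conv: "(a (Suc k))\<^sup>2 \<le> a k * a (Suc (Suc k))" for k
    using normal_mat_norm_log_convex[OF A N x] by (simp add: a_def x_def)
  assume "\<not> ?thesis"
  then have gt: "(perron_root A)\<^sup>2 * a 0 < a 1"
    by (simp add: a_def x_def)
  then have a1: "0 < a 1"
    using scalar_prod_self_nonneg[of v] by (simp add: a_def x_def) (smt (verit) zero_le_power2 mult_nonneg_nonneg)
  have a0: "0 < a 0"
  proof (rule ccontr)
    assume "\<not> 0 < a 0"
    then have "a 0 = 0" using scalar_prod_self_nonneg by (simp add: a_def order.antisym)
    then show False using conv[of 0] a1 by simp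
  qed
  then have n: "0 < n"
    using v by (cases n) (auto simp: a_def x_def scalar_prod_def)
  define q where "q = a 1 / a 0"
  have q: "(perron_root A)\<^sup>2 < q"
    using gt a0 by (simp add: q_def field_simps)
  define s where "s = ((perron_root A)\<^sup>2 + q) / 2"
  have s: "(perron_root A)\<^sup>2 < s" "s < q" using q by (auto simp: s_def)
  have s0: "0 < s" using s(1) by (smt (verit) zero_le_power2)
  have "perron_root A < sqrt s"
    using s(1) perron_root_nonneg[OF A n] real_less_rsqrt by blast
  moreover have "(sqrt s)\<^sup>2 = s" using s0 by simp
  ultimately obtain K where K: "\<And>k. x k \<bullet> x k \<le> K * s ^ k"
    using perron_root_orbit_bound[OF A n _ v] unfolding x_def funpow_mult_mat_vec[OF A v] by metis
  have "1 < q / s" using s s0 by simp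
  then obtain k where k: "K / a 0 < (q / s) ^ k"
    using real_arch_pow by blast
  have "q ^ k * a 0 \<le> a k"
    unfolding q_def by (rule log_convex_seq_lower_bound[OF a0 a1 conv])
  also have "a k \<le> K * s ^ k"
    unfolding a_def by (rule K)
  finally have "(q / s) ^ k \<le> K / a 0"
    using a0 s0 by (simp add: power_divide field_simps)
  with k show False by simp
qed

section \<open>Symmetric Perron vectors\<close>

lemma sum_squares_le_imp_eq:
  fixes f g :: "'i \<Rightarrow> real"
  assumes "finite I" and "\<And>i. i \<in> I \<Longrightarrow> 0 \<le> g i \<and> g i \<le> f i"
    and "(\<Sum>i\<in>I. f i * f i) \<le> (\<Sum>i\<in>I. g i * g i)" and "i \<in> I"
  shows "f i = g i"
proof -
  have terms: "0 \<le> f j * f j - g j * g j" if "j \<in> I" for j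
    using assms(2)[OF that] by (simp add: mult_mono)
  moreover have "(\<Sum>j\<in>I. f j * f j - g j * g j) \<le> 0"
    using assms(3) by (simp add: sum_subtractf)
  ultimately have "(\<Sum>j\<in>I. f j * f j - g j * g j) = 0"
    by (meson order.antisym sum_nonneg)
  then have "f i * f i = g i * g i"
    using sum_nonneg_eq_0_iff[OF assms(1), of "\<lambda>j. f j * f j - g j * g j"] terms assms(4) by auto
  moreover have "0 \<le> g i" "0 \<le> f i" using assms(2)[OF assms(4)] by auto
  ultimately show ?thesis
    using power2_eq_iff_nonneg[of "f i" "g i"] by (simp add: power2_eq_square)
qed

lemma nonneg_mat_abs_eigenvector:
  fixes A :: "real mat"
  assumes A: "A \<in> carrier_mat n n" and nonneg: "nonneg_mat A" and x: "x \<in> carrier_vec n"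
    and eig: "A *\<^sub>v x = r \<cdot>\<^sub>v x" and r: "0 \<le> r" and i: "i < n"
  shows "r * \<bar>x $ i\<bar> \<le> (A *\<^sub>v vec n (\<lambda>l. \<bar>x $ l\<bar>)) $ i"
proof -
  have "r * \<bar>x $ i\<bar> = \<bar>\<Sum>l = 0..<n. A $$ (i, l) * x $ l\<bar>"
    using arg_cong[OF eig, of "\<lambda>v. \<bar>v $ i\<bar>"] i A x r by (simp add: abs_mult scalar_prod_def)
  also have "\<dots> \<le> (\<Sum>l = 0..<n. \<bar>A $$ (i, l) * x $ l\<bar>)"
    by (rule sum_abs)
  also have "\<dots> = (\<Sum>l = 0..<n. A $$ (i, l) * \<bar>x $ l\<bar>)"
    using nonneg A i unfolding nonneg_mat_def by (intro sum.cong) (auto simp: abs_mult)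
  also have "\<dots> = (A *\<^sub>v vec n (\<lambda>l. \<bar>x $ l\<bar>)) $ i"
    using i A by (simp add: scalar_prod_def)
  finally show ?thesis .
qed

lemma nonneg_perron_eigenvector:
  fixes A :: "real mat"
  assumes A: "A \<in> carrier_mat n n" and nonneg: "nonneg_mat A" and N: "normal_mat A"
    and eig: "eigenvalue A (perron_root A)"
  shows "\<exists>y. y \<in> carrier_vec n \<and> y \<noteq> 0\<^sub>v n \<and> (\<forall>i<n. 0 \<le> y $ i) \<and> A *\<^sub>v y = perron_root A \<cdot>\<^sub>v y"
proof -
  let ?r = "perron_root A"
  obtain x where x: "x \<in> carrier_vec n" "x \<noteq> 0\<^sub>v n" "A *\<^sub>v x = ?r \<cdot>\<^sub>v x"
    using eig A unfolding eigenvalue_def eigenvector_def by auto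
  have n: "0 < n" using x(1,2) by (cases n) auto
  define y where "y = vec n (\<lambda>i. \<bar>x $ i\<bar>)"
  have y: "y \<in> carrier_vec n" by (simp add: y_def)
  have r: "0 \<le> ?r" by (rule perron_root_nonneg[OF A n])
  have ge: "0 \<le> ?r * y $ i \<and> ?r * y $ i \<le> (A *\<^sub>v y) $ i" if "i < n" for i
    using nonneg_mat_abs_eigenvector[OF A nonneg x(1) x(3) r that] r that by (simp add: y_def)
  have "(A *\<^sub>v y) \<bullet> (A *\<^sub>v y) \<le> (?r * ?r) * (y \<bullet> y)"
    using normal_mat_norm_le_perron_root[OF A N y] by (simp add: power2_eq_square)
  then have "(\<Sum>i = 0..<n. (A *\<^sub>v y) $ i * (A *\<^sub>v y) $ i) \<le> (\<Sum>i = 0..<n. (?r * y $ i) * (?r * y $ i))"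
    using A y by (simp add: scalar_prod_def sum_distrib_left mult_ac)
  then have "(A *\<^sub>v y) $ i = ?r * y $ i" if "i < n" for i
    using sum_squares_le_imp_eq[of "{0..<n}" "\<lambda>i. ?r * y $ i" "\<lambda>i. (A *\<^sub>v y) $ i"] ge that by simp
  then have "A *\<^sub>v y = ?r \<cdot>\<^sub>v y"
    using A y by (intro eq_vecI) auto
  moreover have "y \<noteq> 0\<^sub>v n"
  proof
    assume y0: "y = 0\<^sub>v n"
    have "\<bar>x $ i\<bar> = 0" if "i < n" for i
      using that arg_cong[OF y0, of "\<lambda>v. v $ i"] by (simp add: y_def)
    then have "x = 0\<^sub>v n" using x(1) by (intro eq_vecI) auto
    with x(2) show False ..
  qed
  ultimately show ?thesis
    using y by (intro exI[of _ y]) (auto simp: y_def)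
qed

lemma normal_mat_eigenvector_transpose:
  fixes A :: "real mat"
  assumes A: "A \<in> carrier_mat n n" and N: "normal_mat A" and y: "y \<in> carrier_vec n"
    and eig: "A *\<^sub>v y = w \<cdot>\<^sub>v y"
  shows "transpose_mat A *\<^sub>v y = w \<cdot>\<^sub>v y"
proof -
  define z where "z = transpose_mat A *\<^sub>v y"
  have z: "z \<in> carrier_vec n" using A y by (simp add: z_def)
  have zz: "z \<bullet> z = w\<^sup>2 * (y \<bullet> y)"
    unfolding z_def normal_mat_norm_transpose[OF A N y] eig using y
    by (simp add: power2_eq_square)
  have zy: "z \<bullet> y = w * (y \<bullet> y)"
    unfolding z_def transpose_vec_mult_scalar[OF A y y] eig using y by simp
  have "(\<Sum>i = 0..<n. (z $ i - w * y $ i)\<^sup>2) = z \<bullet> z - 2 * w * (z \<bullet> y) + w\<^sup>2 * (y \<bullet> y)"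
    using z y by (simp add: scalar_prod_def power2_eq_square algebra_simps sum.distrib
        sum_subtractf sum_distrib_left)
  also have "\<dots> = 0" by (simp add: zz zy power2_eq_square)
  finally have "z $ i = w * y $ i" if "i < n" for i
    using sum_nonneg_eq_0_iff[of "{0..<n}" "\<lambda>i. (z $ i - w * y $ i)\<^sup>2"] that by auto
  then show ?thesis
    using z y A by (intro eq_vecI) (auto simp: z_def)
qed

definition rev_vec :: "'a vec \<Rightarrow> 'a vec" where
  "rev_vec v = vec (dim_vec v) (\<lambda>i. v $ (dim_vec v - 1 - i))"

lemma dim_rev_vec [simp]: "dim_vec (rev_vec v) = dim_vec v"
  by (simp add: rev_vec_def)

lemma rev_vec_carrier [simp]: "v \<in> carrier_vec n \<Longrightarrow> rev_vec v \<in> carrier_vec n"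
  unfolding carrier_vec_def by simp

lemma index_rev_vec [simp]: "i < dim_vec v \<Longrightarrow> rev_vec v $ i = v $ (dim_vec v - 1 - i)"
  by (simp add: rev_vec_def)

lemma mult_mat_vec_rev_vec:
  assumes A: "A \<in> carrier_mat n n" and y: "y \<in> carrier_vec n"
    and cs: "\<And>i k. i < n \<Longrightarrow> k < n \<Longrightarrow> A $$ (n - 1 - i, n - 1 - k) = A $$ (i, k)"
  shows "A *\<^sub>v rev_vec y = rev_vec (A *\<^sub>v (y :: 'a :: comm_semiring_0 vec))"
proof (rule eq_vecI)
  fix i assume "i < dim_vec (rev_vec (A *\<^sub>v y))"
  then have i: "i < n" using A by (simp add: rev_vec_def)
  have rev: "bij_betw (\<lambda>l. n - 1 - l) {0..<n} {0..<n}"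
    by (rule bij_betwI[where g = "\<lambda>l. n - 1 - l"]) auto
  have "(A *\<^sub>v rev_vec y) $ i = (\<Sum>l = 0..<n. A $$ (i, l) * y $ (n - 1 - l))"
    using A y i by (auto simp: scalar_prod_def intro!: sum.cong)
  also have "\<dots> = (\<Sum>l = 0..<n. A $$ (i, n - 1 - l) * y $ l)"
    using sum.reindex_bij_betw[OF rev, of "\<lambda>l. A $$ (i, n - 1 - l) * y $ l"] by (simp add: algebra_simps)
  also have "\<dots> = (\<Sum>l = 0..<n. A $$ (n - 1 - i, l) * y $ l)"
  proof (rule sum.cong[OF refl])
    fix l assume l: "l \<in> {0..<n}"
    then show "A $$ (i, n - 1 - l) * y $ l = A $$ (n - 1 - i, l) * y $ l"
      using cs[of i "n - 1 - l"] i by auto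
  qed
  also have "\<dots> = rev_vec (A *\<^sub>v y) $ i"
    using A y i by (simp add: scalar_prod_def)
  finally show "(A *\<^sub>v rev_vec y) $ i = rev_vec (A *\<^sub>v y) $ i" .
qed (use A y in simp)

lemma rev_vec_smult: "rev_vec (c \<cdot>\<^sub>v v) = c \<cdot>\<^sub>v rev_vec v"
  by (rule eq_vecI) auto

lemma centrosymmetric_eigenvector_symmetrize:
  fixes A :: "real mat"
  assumes A: "A \<in> carrier_mat n n" and y: "y \<in> carrier_vec n"
    and cs: "\<And>i k. i < n \<Longrightarrow> k < n \<Longrightarrow> A $$ (n - 1 - i, n - 1 - k) = A $$ (i, k)"
    and eig: "A *\<^sub>v y = r \<cdot>\<^sub>v y"
  shows "A *\<^sub>v (y + rev_vec y) = r \<cdot>\<^sub>v (y + rev_vec y)"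
proof -
  have "A *\<^sub>v (y + rev_vec y) = A *\<^sub>v y + rev_vec (A *\<^sub>v y)"
    using mult_add_distrib_mat_vec[OF A y rev_vec_carrier[OF y]] mult_mat_vec_rev_vec[OF A y cs]
    by simp
  then show ?thesis
    using y by (simp add: eig rev_vec_smult smult_add_distrib_vec)
qed

lemma centrosymmetric_symmetrized_eigenvector:
  fixes A :: "real mat"
  assumes A: "A \<in> carrier_mat n n" and cs: "centrosymmetric A" and y: "y \<in> carrier_vec n"
    and eig: "A *\<^sub>v y = r \<cdot>\<^sub>v y" and eig_T: "transpose_mat A *\<^sub>v y = r \<cdot>\<^sub>v y"
  shows "A *\<^sub>v (y + rev_vec y) = r \<cdot>\<^sub>v (y + rev_vec y)"
    "transpose_mat A *\<^sub>v (y + rev_vec y) = r \<cdot>\<^sub>v (y + rev_vec y)"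
    "rev_vec (y + rev_vec y) = y + rev_vec y"
proof -
  have cs_A: "A $$ (n - 1 - i, n - 1 - k) = A $$ (i, k)" if "i < n" "k < n" for i k
    using centrosymmetric_index[OF cs A that] .
  show "A *\<^sub>v (y + rev_vec y) = r \<cdot>\<^sub>v (y + rev_vec y)"
    by (rule centrosymmetric_eigenvector_symmetrize[OF A y cs_A eig])
  show "transpose_mat A *\<^sub>v (y + rev_vec y) = r \<cdot>\<^sub>v (y + rev_vec y)"
    using cs_A A by (intro centrosymmetric_eigenvector_symmetrize[OF _ y _ eig_T]) auto
  show "rev_vec (y + rev_vec y) = y + rev_vec y"
    using y by (intro eq_vecI) auto
qed

lemma symmetric_perron_vector:
  fixes A :: "real mat"
  assumes A: "A \<in> carrier_mat n n" and nonneg: "nonneg_mat A" and N: "normal_mat A"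
    and cs: "centrosymmetric A" and eig: "eigenvalue A (perron_root A)"
  shows "\<exists>u. u \<in> carrier_vec n \<and> (\<forall>i<n. 0 \<le> u $ i) \<and> u \<bullet> u = 1
    \<and> A *\<^sub>v u = perron_root A \<cdot>\<^sub>v u \<and> transpose_mat A *\<^sub>v u = perron_root A \<cdot>\<^sub>v u
    \<and> rev_vec u = u"
proof -
  let ?r = "perron_root A"
  obtain y where y: "y \<in> carrier_vec n" "y \<noteq> 0\<^sub>v n" "\<And>i. i < n \<Longrightarrow> 0 \<le> y $ i"
    and Ay: "A *\<^sub>v y = ?r \<cdot>\<^sub>v y"
    using nonneg_perron_eigenvector[OF A nonneg N eig] by blast
  have AT: "transpose_mat A \<in> carrier_mat n n" using A by simp
  define z where "z = y + rev_vec y"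
  have z: "z \<in> carrier_vec n" using y by (simp add: z_def)
  have z_nonneg: "0 \<le> z $ i" if "i < n" for i
    using y(1,3) that by (simp add: z_def)
  note z_props = centrosymmetric_symmetrized_eigenvector[OF A cs y(1) Ay
      normal_mat_eigenvector_transpose[OF A N y(1) Ay], folded z_def]
  obtain j where j: "j < n" "y $ j \<noteq> 0"
    using y(1,2) by (metis carrier_vecD eq_vecI index_zero_vec(1,2))
  have "0 < z $ j"
    using j y(1) y(3)[of j] y(3)[of "n - 1 - j"] by (simp add: z_def)
  then have "0 < z $ j * z $ j" by simp
  also have "\<dots> \<le> z \<bullet> z"
    using z j(1) by (simp add: scalar_prod_def) (intro member_le_sum, auto)
  finally have zz: "0 < z \<bullet> z" .
  define u where "u = (1 / sqrt (z \<bullet> z)) \<cdot>\<^sub>v z"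
  have "u \<bullet> u = 1"
    using z zz by (simp add: u_def)
  moreover have "rev_vec u = u"
    using z_props(3) by (simp add: u_def rev_vec_smult)
  moreover have "A *\<^sub>v u = ?r \<cdot>\<^sub>v u" "transpose_mat A *\<^sub>v u = ?r \<cdot>\<^sub>v u"
    using z_props(1,2) A AT z by (simp_all add: u_def mult_mat_vec smult_smult_assoc mult.commute)
  ultimately show ?thesis
    using z z_nonneg zz by (intro exI[of _ u]) (simp add: u_def)
qed

section \<open>A centrosymmetric layout of blocks\<close>

definition offset :: "(nat \<Rightarrow> nat) \<Rightarrow> nat \<Rightarrow> nat" where
  "offset q j = (\<Sum>k<j. q k)"

lemma offset_0 [simp]: "offset q 0 = 0"
  by (simp add: offset_def)

lemma offset_Suc: "offset q (Suc j) = offset q j + q j"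
  by (simp add: offset_def)

lemma offset_mono: "j \<le> k \<Longrightarrow> offset q j \<le> offset q k"
  unfolding offset_def by (rule sum_mono2) auto

lemma offset_add_less:
  assumes "j < k" and "a < q j"
  shows "offset q j + a < offset q k"
proof -
  have "offset q j + a < offset q (Suc j)" using assms(2) by (simp add: offset_Suc)
  also have "\<dots> \<le> offset q k" using assms(1) by (intro offset_mono) simp
  finally show ?thesis .
qed

lemma offset_add_inj:
  assumes "a < q j" and "b < q k" and eq: "offset q j + a = offset q k + b"
  shows "j = k \<and> a = b"
proof -
  have "j = k"
  proof (rule ccontr)
    assume "j \<noteq> k"
    then consider "j < k" | "k < j" by linarith
    then show False
      using offset_add_less[of j k a q] offset_add_less[of k j b q] assms by cases auto
  qed
  with eq show ?thesis by simp
qed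

definition block_positions :: "nat \<Rightarrow> (nat \<Rightarrow> nat) \<Rightarrow> (nat \<times> nat) set" where
  "block_positions S p = (SIGMA j:{..<S}. {..<p j})"

lemma finite_block_positions [simp]: "finite (block_positions S p)"
  by (simp add: block_positions_def)

lemma card_block_positions: "card (block_positions S p) = offset p S"
  by (simp add: block_positions_def offset_def)

lemma sum_block_positions_if_fst:
  assumes "j < S"
  shows "(\<Sum>z\<in>block_positions S p. if fst z = j then g (snd z) else 0) = (\<Sum>c<p j. g c)"
proof -
  have "(\<Sum>z\<in>block_positions S p. if fst z = j then g (snd z) else 0)
      = (\<Sum>l<S. \<Sum>c<p l. if l = j then g c else 0)"
    unfolding block_positions_def by (subst sum.Sigma) (auto simp: case_prod_beta)
  also have "\<dots> = (\<Sum>l<S. if l = j then (\<Sum>c<p l. g c) else 0)"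
    by (intro sum.cong) auto
  finally show ?thesis using assms by simp
qed

lemma bij_betw_lessThan_card:
  assumes "inj_on f A" and "f ` A \<subseteq> {..<n}" and "card A = n" and "finite A"
  shows "bij_betw f A {..<n}"
  using assms card_image[OF assms(1)] unfolding bij_betw_def
  by (metis card_lessThan card_subset_eq finite_lessThan)

locale centro_blocks =
  fixes S :: nat and p :: "nat \<Rightarrow> nat"
  assumes at_most_one_odd: "\<And>j k. j < S \<Longrightarrow> k < S \<Longrightarrow> odd (p j) \<Longrightarrow> odd (p k) \<Longrightarrow> j = k"
begin

definition dim :: nat where "dim = offset p S"

definition half_dim :: nat where "half_dim = offset (\<lambda>j. p j div 2) S"

text \<open>The first halves of all blocks fill the first positions in block order, the middle
  entry of the (at most one) block of odd size sits in the centre, and the second halves are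
  placed at the mirror images of the first halves.\<close>
definition layout :: "nat \<times> nat \<Rightarrow> nat" where
  "layout = (\<lambda>(j, a).
     if a < p j div 2 then offset (\<lambda>j. p j div 2) j + a
     else if 2 * a + 1 = p j then half_dim
     else dim - 1 - (offset (\<lambda>j. p j div 2) j + (p j - 1 - a)))"

lemma dim_eq: "dim = 2 * half_dim + card {j. j < S \<and> odd (p j)}"
  unfolding dim_def half_dim_def
proof (induction S)
  case (Suc S)
  have "{j. j < Suc S \<and> odd (p j)} = {j. j < S \<and> odd (p j)} \<union> (if odd (p S) then {S} else {})"
    by (auto simp: less_Suc_eq)
  then have "card {j. j < Suc S \<and> odd (p j)} = card {j. j < S \<and> odd (p j)} + (if odd (p S) then 1 else 0)"
    by (auto simp: card_insert_if)
  moreover have "p S = 2 * (p S div 2) + (if odd (p S) then 1 else 0)" by presburger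
  ultimately show ?case using Suc by (simp add: offset_Suc)
qed simp

lemma dim_if_odd: "j < S \<Longrightarrow> odd (p j) \<Longrightarrow> dim = 2 * half_dim + 1"
  using dim_eq card_le_Suc0_iff_eq[of "{j. j < S \<and> odd (p j)}"] at_most_one_odd
    card_0_eq[of "{j. j < S \<and> odd (p j)}"] by fastforce

lemma layout_low:
  assumes "j < S" "a < p j div 2"
  shows "layout (j, a) = offset (\<lambda>j. p j div 2) j + a" "layout (j, a) < half_dim"
  using assms offset_add_less[OF assms(1), of a "\<lambda>j. p j div 2"]
  by (auto simp: layout_def half_dim_def)

lemma layout_mid:
  assumes "j < S" "2 * a + 1 = p j"
  shows "layout (j, a) = half_dim" "dim = 2 * half_dim + 1"
proof -
  have "odd (p j)" using assms(2) by presburger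
  then show "dim = 2 * half_dim + 1" using dim_if_odd assms(1) by blast
  show "layout (j, a) = half_dim"
    using assms(2) by (auto simp: layout_def)
qed

lemma layout_high:
  assumes "j < S" "a < p j" "\<not> a < p j div 2" "2 * a + 1 \<noteq> p j"
  shows "p j - 1 - a < p j div 2" "layout (j, a) = dim - 1 - layout (j, p j - 1 - a)"
proof -
  show m: "p j - 1 - a < p j div 2" using assms(2-4) by presburger
  then show "layout (j, a) = dim - 1 - layout (j, p j - 1 - a)"
    using assms(3,4) layout_low(1)[OF assms(1) m] by (simp add: layout_def)
qed

lemma layout_less:
  assumes "(j, a) \<in> block_positions S p"
  shows "layout (j, a) < dim"
proof -
  have j: "j < S" and a: "a < p j" using assms by (auto simp: block_positions_def)
  have "0 < dim" using offset_add_less[of j S a p] j a by (simp add: dim_def)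
  consider "a < p j div 2" | "2 * a + 1 = p j" | "\<not> a < p j div 2" "2 * a + 1 \<noteq> p j" by blast
  then show ?thesis
  proof cases
    case 1 then show ?thesis using layout_low(2)[OF j 1] dim_eq by simp
  next
    case 2 then show ?thesis using layout_mid[OF j 2] by simp
  next
    case 3 then show ?thesis using layout_high(2)[OF j a 3] \<open>0 < dim\<close> by simp
  qed
qed

lemma layout_mirror:
  assumes "(j, a) \<in> block_positions S p"
  shows "layout (j, p j - 1 - a) = dim - 1 - layout (j, a)"
proof -
  have j: "j < S" and a: "a < p j" using assms by (auto simp: block_positions_def)
  consider "a < p j div 2" | "2 * a + 1 = p j" | "\<not> a < p j div 2" "2 * a + 1 \<noteq> p j" by blast
  then show ?thesis
  proof cases
    case 1
    then have "\<not> p j - 1 - a < p j div 2" "2 * (p j - 1 - a) + 1 \<noteq> p j" "p j - 1 - (p j - 1 - a) = a"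
      using a by presburger+
    then show ?thesis using layout_high[of j "p j - 1 - a"] j a by simp
  next
    case 2
    then show ?thesis using layout_mid[OF j] by simp
  next
    case 3
    then show ?thesis
      using layout_high[OF j a 3] layout_low(2)[OF j layout_high(1)[OF j a 3]] dim_eq by simp
  qed
qed

lemma layout_low_inj:
  assumes "j < S" "a < p j div 2" "k < S" "b < p k div 2" and "layout (j, a) = layout (k, b)"
  shows "j = k \<and> a = b"
  using offset_add_inj[of a "\<lambda>j. p j div 2" j b k] layout_low(1) assms by simp

lemma layout_upper:
  assumes "j < S" "a < p j" "\<not> a < p j div 2"
  shows "half_dim \<le> layout (j, a)"
proof (cases "2 * a + 1 = p j")
  case True
  then show ?thesis using layout_mid[OF assms(1)] by simp
next
  case False
  then show ?thesis
    using layout_high[OF assms False] layout_low(2)[OF assms(1) layout_high(1)[OF assms False]] dim_eq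
    by simp
qed

lemma layout_upper_inj:
  assumes j: "j < S" "a < p j" "\<not> a < p j div 2" and k: "k < S" "b < p k" "\<not> b < p k div 2"
    and eq: "layout (j, a) = layout (k, b)"
  shows "j = k \<and> a = b"
proof -
  consider "2 * a + 1 = p j" "2 * b + 1 = p k" | "2 * a + 1 = p j" "2 * b + 1 \<noteq> p k"
    | "2 * a + 1 \<noteq> p j" "2 * b + 1 = p k" | "2 * a + 1 \<noteq> p j" "2 * b + 1 \<noteq> p k"
    by blast
  then show ?thesis
  proof cases
    case 1
    then have "odd (p j)" "odd (p k)" by presburger+
    then have "j = k" using at_most_one_odd j(1) k(1) by blast
    then show ?thesis using 1 by simp
  next
    case 2
    then show ?thesis
      using layout_mid[OF j(1) 2(1)] layout_high[OF k 2(2)]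
        layout_low(2)[OF k(1) layout_high(1)[OF k 2(2)]] eq by simp
  next
    case 3
    then show ?thesis
      using layout_mid[OF k(1) 3(2)] layout_high[OF j 3(1)]
        layout_low(2)[OF j(1) layout_high(1)[OF j 3(1)]] eq by simp
  next
    case 4
    \<comment> \<open>both positions lie in second halves: compare their mirror images in the first halves\<close>
    have "layout (j, p j - 1 - a) = layout (k, p k - 1 - b)"
      using layout_high(2)[OF j 4(1)] layout_high(2)[OF k 4(2)] eq dim_eq
        layout_low(2)[OF j(1) layout_high(1)[OF j 4(1)]]
        layout_low(2)[OF k(1) layout_high(1)[OF k 4(2)]] by simp arith
    then have "j = k \<and> p j - 1 - a = p k - 1 - b"
      using layout_low_inj[OF j(1) layout_high(1)[OF j 4(1)] k(1) layout_high(1)[OF k 4(2)]] by blast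
    then show ?thesis using j k by auto
  qed
qed

lemma layout_inj: "inj_on layout (block_positions S p)"
proof (rule inj_onI)
  fix x y assume x: "x \<in> block_positions S p" and y: "y \<in> block_positions S p"
    and eq: "layout x = layout y"
  obtain j a k b where xy: "x = (j, a)" "y = (k, b)" by force
  have j: "j < S" "a < p j" and k: "k < S" "b < p k"
    using x y xy by (auto simp: block_positions_def)
  show "x = y"
  proof (cases "a < p j div 2"; cases "b < p k div 2")
    assume "a < p j div 2" "b < p k div 2"
    then show ?thesis using layout_low_inj[OF j(1) _ k(1)] eq xy by auto
  next
    assume "a < p j div 2" "\<not> b < p k div 2"
    then show ?thesis using layout_low(2)[OF j(1)] layout_upper[OF k] eq xy by fastforce
  next
    assume "\<not> a < p j div 2" "b < p k div 2"
    then show ?thesis using layout_low(2)[OF k(1)] layout_upper[OF j] eq xy by fastforce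
  next
    assume "\<not> a < p j div 2" "\<not> b < p k div 2"
    then show ?thesis using layout_upper_inj[OF j _ k] eq xy by auto
  qed
qed

lemma layout_bij: "bij_betw layout (block_positions S p) {..<dim}"
  using layout_inj layout_less
  by (intro bij_betw_lessThan_card) (auto simp: card_block_positions dim_def)

end

section \<open>The glued matrix\<close>

locale centrosymmetric_gluing = centro_blocks S p
  for S :: nat and p :: "nat \<Rightarrow> nat" +
  fixes A :: "nat \<Rightarrow> real mat" and w :: "nat \<Rightarrow> real" and B :: "real mat"
  assumes block_dim_pos: "\<And>j. j < S \<Longrightarrow> 0 < p j"
    and block_carrier: "\<And>j. j < S \<Longrightarrow> A j \<in> carrier_mat (p j) (p j)"
    and block_nonneg: "\<And>j. j < S \<Longrightarrow> nonneg_mat (A j)"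
    and block_normal: "\<And>j. j < S \<Longrightarrow> normal_mat (A j)"
    and block_centrosymmetric: "\<And>j. j < S \<Longrightarrow> centrosymmetric (A j)"
    and block_perron_root: "\<And>j. j < S \<Longrightarrow> perron_root (A j) = w j"
    and block_eigenvalue: "\<And>j. j < S \<Longrightarrow> eigenvalue (A j) (w j)"
    and B_carrier: "B \<in> carrier_mat S S" and B_normal: "normal_mat B" and B_nonneg: "nonneg_mat B"
    and B_diag: "\<And>j. j < S \<Longrightarrow> B $$ (j, j) = w j"
begin

definition perron_vec :: "nat \<Rightarrow> real vec" where
  "perron_vec j = (SOME v. v \<in> carrier_vec (p j) \<and> (\<forall>i<p j. 0 \<le> v $ i) \<and> v \<bullet> v = 1
     \<and> A j *\<^sub>v v = w j \<cdot>\<^sub>v v \<and> transpose_mat (A j) *\<^sub>v v = w j \<cdot>\<^sub>v v \<and> rev_vec v = v)"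

lemma perron_vec:
  assumes "j < S"
  shows "perron_vec j \<in> carrier_vec (p j)" "\<And>i. i < p j \<Longrightarrow> 0 \<le> perron_vec j $ i"
    "perron_vec j \<bullet> perron_vec j = 1" "A j *\<^sub>v perron_vec j = w j \<cdot>\<^sub>v perron_vec j"
    "transpose_mat (A j) *\<^sub>v perron_vec j = w j \<cdot>\<^sub>v perron_vec j"
    "rev_vec (perron_vec j) = perron_vec j"
proof -
  have "eigenvalue (A j) (perron_root (A j))"
    using block_eigenvalue[OF assms] block_perron_root[OF assms] by simp
  from symmetric_perron_vector[OF block_carrier[OF assms] block_nonneg[OF assms]
      block_normal[OF assms] block_centrosymmetric[OF assms] this]
  have "\<exists>v. v \<in> carrier_vec (p j) \<and> (\<forall>i<p j. 0 \<le> v $ i) \<and> v \<bullet> v = 1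
     \<and> A j *\<^sub>v v = w j \<cdot>\<^sub>v v \<and> transpose_mat (A j) *\<^sub>v v = w j \<cdot>\<^sub>v v \<and> rev_vec v = v"
    unfolding block_perron_root[OF assms] .
  from someI_ex[OF this] show "perron_vec j \<in> carrier_vec (p j)" "\<And>i. i < p j \<Longrightarrow> 0 \<le> perron_vec j $ i"
    "perron_vec j \<bullet> perron_vec j = 1" "A j *\<^sub>v perron_vec j = w j \<cdot>\<^sub>v perron_vec j"
    "transpose_mat (A j) *\<^sub>v perron_vec j = w j \<cdot>\<^sub>v perron_vec j"
    "rev_vec (perron_vec j) = perron_vec j"
    unfolding perron_vec_def[symmetric] by auto
qed

definition reflection :: "nat \<Rightarrow> real mat" where
  "reflection j = reflector (p j) (perron_vec j)"

definition reduced :: "nat \<Rightarrow> real mat" where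
  "reduced j = reflection j * A j * reflection j"

definition deflated :: "nat \<Rightarrow> real mat" where
  "deflated j = mat (p j - 1) (p j - 1) (\<lambda>(a, b). reduced j $$ (a + 1, b + 1))"

lemma reflection:
  assumes "j < S"
  shows "reflection j \<in> carrier_mat (p j) (p j)" "reflection j * reflection j = 1\<^sub>m (p j)"
    "transpose_mat (reflection j) = reflection j" "\<And>a. a < p j \<Longrightarrow> reflection j $$ (a, 0) = perron_vec j $ a"
    "\<And>a. a < p j \<Longrightarrow> reflection j $$ (0, a) = perron_vec j $ a"
proof -
  note u = perron_vec[OF assms]
  note p = block_dim_pos[OF assms]
  have u0: "0 \<le> perron_vec j $ 0" using u(2) p by simp
  show "reflection j \<in> carrier_mat (p j) (p j)" by (simp add: reflection_def)
  show "reflection j * reflection j = 1\<^sub>m (p j)"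
    unfolding reflection_def by (rule reflector_involution[OF p u(1) u0 u(3)])
  show T: "transpose_mat (reflection j) = reflection j"
    unfolding reflection_def by (rule transpose_reflector)
  show col: "reflection j $$ (a, 0) = perron_vec j $ a" if "a < p j" for a
    using arg_cong[OF col_reflector_0[OF p u(1) u0 u(3)], of "\<lambda>v. v $ a"] that p
    by (simp add: reflection_def)
  show "reflection j $$ (0, a) = perron_vec j $ a" if "a < p j" for a
    using arg_cong[OF T, of "\<lambda>M. M $$ (a, 0)"] col[OF that] that p
    by (simp add: reflection_def)
qed

lemma reduced_block_form:
  assumes "j < S"
  shows "reduced j = four_block_mat (mat 1 1 (\<lambda>_. w j)) (0\<^sub>m 1 (p j - 1)) (0\<^sub>m (p j - 1) 1) (deflated j)"
  unfolding reduced_def deflated_def reflection_def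
  using reflector_conjugate_block[OF block_dim_pos perron_vec(1) _ perron_vec(3) block_carrier
      perron_vec(4,5)] perron_vec(2) block_dim_pos assms by auto

lemma reduced_carrier: "j < S \<Longrightarrow> reduced j \<in> carrier_mat (p j) (p j)"
  unfolding reduced_def using reflection(1) block_carrier by (meson mult_carrier_mat)

lemma reduced_index:
  assumes j: "j < S" and a: "a < p j" and b: "b < p j"
  shows "reduced j $$ (a, b) = (if a = 0 \<and> b = 0 then w j
    else if a = 0 \<or> b = 0 then 0 else deflated j $$ (a - 1, b - 1))"
  using arg_cong[OF reduced_block_form[OF j], of "\<lambda>M. M $$ (a, b)"] a b block_dim_pos[OF j]
  by (auto simp: deflated_def)

lemma char_poly_block:
  assumes "j < S"
  shows "char_poly (A j) = [:- w j, 1:] * char_poly (deflated j)"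
proof -
  have "similar_mat (reduced j) (A j)"
    unfolding reduced_def
    by (rule similar_matI[of _ _ _ _ "p j"]) (use reflection[OF assms] block_carrier[OF assms] in auto)
  then have "char_poly (A j) = char_poly (reduced j)"
    by (simp add: char_poly_similar)
  also have "\<dots> = char_poly (mat 1 1 (\<lambda>_. w j)) * char_poly (deflated j)"
    unfolding reduced_block_form[OF assms]
    by (rule char_poly_four_block_diag) (auto simp: deflated_def)
  finally show ?thesis
    unfolding char_poly_1x1 .
qed

lemma normal_deflated:
  assumes "j < S"
  shows "normal_mat (deflated j)"
proof -
  have "normal_mat (reduced j)"
    unfolding reduced_def
    using normal_mat_conjugate reflection[OF assms] block_carrier[OF assms] block_normal[OF assms] by blast
  then show ?thesis
    unfolding reduced_block_form[OF assms]
    by (subst (asm) normal_four_block_diag_iff) (auto simp: deflated_def)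
qed


definition label :: "nat \<Rightarrow> nat \<times> nat" where
  "label = inv_into (block_positions S p) layout"

lemma label_bij: "bij_betw label {..<dim} (block_positions S p)"
  unfolding label_def by (rule bij_betw_inv_into[OF layout_bij])

lemma label_mirror:
  assumes i: "i < dim"
  shows "label (dim - 1 - i) = (fst (label i), p (fst (label i)) - 1 - snd (label i))"
proof -
  obtain j a where x: "label i = (j, a)" by force
  have pos: "(j, a) \<in> block_positions S p"
    using bij_betw_apply[OF label_bij] i x by fastforce
  then have mirror_pos: "(j, p j - 1 - a) \<in> block_positions S p"
    by (auto simp: block_positions_def)
  have "layout (j, a) = i"
    using x i layout_bij unfolding label_def by (metis bij_betw_inv_into_right lessThan_iff)
  then have "label (dim - 1 - i) = label (layout (j, p j - 1 - a))"
    using layout_mirror[OF pos] by simp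
  also have "\<dots> = (j, p j - 1 - a)"
    unfolding label_def by (rule inv_into_f_f[OF bij_betw_imp_inj_on[OF layout_bij] mirror_pos])
  finally show ?thesis using x by simp
qed

lemma labelled_mat_cong:
  assumes "\<And>j a k b. j < S \<Longrightarrow> a < p j \<Longrightarrow> k < S \<Longrightarrow> b < p k \<Longrightarrow> F (j, a) (k, b) = G (j, a) (k, b)"
  shows "labelled_mat dim label F = labelled_mat dim label G"
  using assms by (subst labelled_mat_eq_iff[OF label_bij]) (auto simp: block_positions_def)

lemmas mult_labelled = mult_labelled_mat[OF label_bij]

definition coupling :: "nat \<Rightarrow> nat \<Rightarrow> real" where
  "coupling j k = B $$ (j, k) - (if j = k then w j else 0)"

text \<open>The glued matrix is the paper's diag(A_1, ..., A_S) + U (B - Omega) U^T, where the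
  columns of U are the Perron vectors of the blocks and Omega = diag(w_1, ..., w_S), with
  rows and columns arranged by the centrosymmetric layout.\<close>
definition glued_entry :: "nat \<times> nat \<Rightarrow> nat \<times> nat \<Rightarrow> real" where
  "glued_entry x y = (if fst x = fst y then A (fst x) $$ (snd x, snd y) else 0)
     + perron_vec (fst x) $ snd x * coupling (fst x) (fst y) * perron_vec (fst y) $ snd y"

definition glued :: "real mat" where
  "glued = labelled_mat dim label glued_entry"

definition reflection_entry :: "nat \<times> nat \<Rightarrow> nat \<times> nat \<Rightarrow> real" where
  "reflection_entry x y = (if fst x = fst y then reflection (fst x) $$ (snd x, snd y) else 0)"

definition reduced_entry :: "nat \<times> nat \<Rightarrow> nat \<times> nat \<Rightarrow> real" where
  "reduced_entry x y = (if fst x = fst y then reduced (fst x) $$ (snd x, snd y) else 0)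
     + (if snd x = 0 \<and> snd y = 0 then coupling (fst x) (fst y) else 0)"

lemma mult_mat_index_sum:
  "X \<in> carrier_mat m m \<Longrightarrow> Y \<in> carrier_mat m m \<Longrightarrow> a < m \<Longrightarrow> b < m \<Longrightarrow>
    (X * Y) $$ (a, b) = (\<Sum>c<m. X $$ (a, c) * Y $$ (c, b))"
  by (auto simp: scalar_prod_def lessThan_atLeast0)

lemma reflection_involution:
  "labelled_mat dim label reflection_entry * labelled_mat dim label reflection_entry = 1\<^sub>m dim"
proof -
  have "labelled_mat dim label reflection_entry * labelled_mat dim label reflection_entry
      = labelled_mat dim label (\<lambda>x y. if x = y then 1 else 0)"
    unfolding mult_labelled
  proof (rule labelled_mat_cong)
    fix j a k b assume j: "j < S" and a: "a < p j" and k: "k < S" and b: "b < p k"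
    have "(\<Sum>z\<in>block_positions S p. reflection_entry (j, a) z * reflection_entry z (k, b))
        = (\<Sum>z\<in>block_positions S p. if fst z = j
            then reflection j $$ (a, snd z) * reflection_entry (j, snd z) (k, b) else 0)"
      by (rule sum.cong) (auto simp: reflection_entry_def)
    also have "\<dots> = (\<Sum>c<p j. reflection j $$ (a, c) * reflection_entry (j, c) (k, b))"
      by (rule sum_block_positions_if_fst[OF j])
    also have "\<dots> = (if j = k then (reflection j * reflection j) $$ (a, b) else 0)"
      using mult_mat_index_sum[OF reflection(1)[OF j] reflection(1)[OF j] a] b
      by (auto simp: reflection_entry_def)
    also have "\<dots> = (if (j, a) = (k, b) then 1 else 0)"
      using reflection(2)[OF j] a b by auto
    finally show "(\<Sum>z\<in>block_positions S p. reflection_entry (j, a) z * reflection_entry z (k, b))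
        = (if (j, a) = (k, b) then 1 else 0)" .
  qed
  also have "\<dots> = 1\<^sub>m dim"
    using bij_betw_imp_inj_on[OF label_bij] by (intro eq_matI) (auto simp: inj_on_def)
  finally show ?thesis .
qed

lemma transpose_reflection_labelled:
  "transpose_mat (labelled_mat dim label reflection_entry) = labelled_mat dim label reflection_entry"
  unfolding transpose_labelled_mat
proof (rule labelled_mat_cong)
  fix j a k b assume j: "j < S" and a: "a < p j" and k: "k < S" and b: "b < p k"
  show "reflection_entry (k, b) (j, a) = reflection_entry (j, a) (k, b)"
    using arg_cong[OF reflection(3)[OF j], of "\<lambda>M. M $$ (a, b)"] reflection(1)[OF j] a b
    by (auto simp: reflection_entry_def)
qed

lemma reflection_reduced_reflection:
  assumes j: "j < S"
  shows "reflection j * reduced j * reflection j = A j"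
proof -
  have W: "reflection j \<in> carrier_mat (p j) (p j)" and Aj: "A j \<in> carrier_mat (p j) (p j)"
    using reflection(1) block_carrier j by auto
  have "reflection j * reduced j * reflection j
      = (reflection j * reflection j) * A j * (reflection j * reflection j)"
    unfolding reduced_def using W Aj by (simp add: assoc_mult_mat[of _ "p j" "p j" _ "p j" _ "p j"])
  then show ?thesis
    using reflection(2)[OF j] Aj by simp
qed

definition reflected_entry :: "nat \<times> nat \<Rightarrow> nat \<times> nat \<Rightarrow> real" where
  "reflected_entry x y = (if fst x = fst y then (reflection (fst x) * reduced (fst x)) $$ (snd x, snd y) else 0)
     + (if snd y = 0 then perron_vec (fst x) $ snd x * coupling (fst x) (fst y) else 0)"

lemma reflection_mult_reduced:
  "labelled_mat dim label reflection_entry * labelled_mat dim label reduced_entry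
     = labelled_mat dim label reflected_entry"
  unfolding mult_labelled
proof (rule labelled_mat_cong)
  fix j a k b assume j: "j < S" and a: "a < p j" and k: "k < S" and b: "b < p k"
  have "(\<Sum>z\<in>block_positions S p. reflection_entry (j, a) z * reduced_entry z (k, b))
      = (\<Sum>z\<in>block_positions S p. if fst z = j
          then reflection j $$ (a, snd z) * reduced_entry (j, snd z) (k, b) else 0)"
    by (rule sum.cong) (auto simp: reflection_entry_def)
  also have "\<dots> = (\<Sum>c<p j. reflection j $$ (a, c) * reduced_entry (j, c) (k, b))"
    by (rule sum_block_positions_if_fst[OF j])
  also have "\<dots> = (\<Sum>c<p j. (if j = k then reflection j $$ (a, c) * reduced j $$ (c, b) else 0)
      + (if c = 0 then (if b = 0 then reflection j $$ (a, c) * coupling j k else 0) else 0))"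
    by (rule sum.cong) (auto simp: reduced_entry_def algebra_simps)
  also have "\<dots> = (if j = k then (\<Sum>c<p j. reflection j $$ (a, c) * reduced j $$ (c, b)) else 0)
      + (if b = 0 then reflection j $$ (a, 0) * coupling j k else 0)"
    using block_dim_pos[OF j] by (simp add: sum.distrib)
  also have "\<dots> = reflected_entry (j, a) (k, b)"
    using mult_mat_index_sum[OF reflection(1)[OF j] reduced_carrier[OF j] a] b reflection(4)[OF j a]
    by (auto simp: reflected_entry_def)
  finally show "(\<Sum>z\<in>block_positions S p. reflection_entry (j, a) z * reduced_entry z (k, b))
      = reflected_entry (j, a) (k, b)" .
qed

lemma reflected_mult_reflection:
  "labelled_mat dim label reflected_entry * labelled_mat dim label reflection_entry = glued"
  unfolding mult_labelled glued_def
proof (rule labelled_mat_cong)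
  fix j a k b assume j: "j < S" and a: "a < p j" and k: "k < S" and b: "b < p k"
  have "(\<Sum>z\<in>block_positions S p. reflected_entry (j, a) z * reflection_entry z (k, b))
      = (\<Sum>z\<in>block_positions S p. if fst z = k
          then reflected_entry (j, a) (k, snd z) * reflection k $$ (snd z, b) else 0)"
    by (rule sum.cong) (auto simp: reflection_entry_def)
  also have "\<dots> = (\<Sum>c<p k. reflected_entry (j, a) (k, c) * reflection k $$ (c, b))"
    by (rule sum_block_positions_if_fst[OF k])
  also have "\<dots> = (\<Sum>c<p k. (if j = k then (reflection j * reduced j) $$ (a, c) * reflection k $$ (c, b) else 0)
      + (if c = 0 then perron_vec j $ a * coupling j k * reflection k $$ (c, b) else 0))"
    by (rule sum.cong) (auto simp: reflected_entry_def algebra_simps)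
  also have "\<dots> = (if j = k then (\<Sum>c<p k. (reflection j * reduced j) $$ (a, c) * reflection k $$ (c, b)) else 0)
      + perron_vec j $ a * coupling j k * reflection k $$ (0, b)"
    using block_dim_pos[OF k] by (simp add: sum.distrib)
  also have "\<dots> = glued_entry (j, a) (k, b)"
    using mult_mat_index_sum[of "reflection j * reduced j" "p j" "reflection j" a b]
      reflection(1)[OF j] reduced_carrier[OF j] a b reflection_reduced_reflection[OF j] reflection(5)[OF k b]
    by (auto simp: glued_entry_def)
  finally show "(\<Sum>z\<in>block_positions S p. reflected_entry (j, a) z * reflection_entry z (k, b))
      = glued_entry (j, a) (k, b)" .
qed

lemma reflection_conjugates_reduced_to_glued:
  "labelled_mat dim label reflection_entry * labelled_mat dim label reduced_entry
     * labelled_mat dim label reflection_entry = glued"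
  unfolding reflection_mult_reduced by (rule reflected_mult_reflection)

lemma dim_eq_split: "dim = S + offset (\<lambda>j. p j - 1) S"
proof -
  have "dim = (\<Sum>j<S. 1 + (p j - 1))"
    unfolding dim_def offset_def using block_dim_pos by (intro sum.cong) auto
  then have "dim = (\<Sum>j<S. 1) + offset (\<lambda>j. p j - 1) S"
    by (simp only: sum.distrib offset_def)
  then show ?thesis by simp
qed

definition block_order :: "nat \<times> nat \<Rightarrow> nat" where
  "block_order = (\<lambda>(j, a). if a = 0 then j else S + offset (\<lambda>j. p j - 1) j + (a - 1))"

lemma block_order_bij: "bij_betw block_order (block_positions S p) {..<dim}"
proof (rule bij_betw_lessThan_card)
  show "inj_on block_order (block_positions S p)"
  proof (rule inj_onI)
    fix x y assume "x \<in> block_positions S p" "y \<in> block_positions S p" and eq: "block_order x = block_order y"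
    then obtain j a k b where xy: "x = (j, a)" "y = (k, b)" and j: "j < S" "a < p j" and k: "k < S" "b < p k"
      by (auto simp: block_positions_def)
    show "x = y"
    proof (cases "a = 0"; cases "b = 0")
      assume a: "a \<noteq> 0" and b: "b \<noteq> 0"
      have "offset (\<lambda>j. p j - 1) j + (a - 1) = offset (\<lambda>j. p j - 1) k + (b - 1)"
        using eq xy a b by (simp add: block_order_def)
      moreover have "a - 1 < p j - 1" "b - 1 < p k - 1" using j k a b by auto
      ultimately have "j = k \<and> a - 1 = b - 1"
        using offset_add_inj[of "a - 1" "\<lambda>j. p j - 1" j "b - 1" k] by blast
      then show ?thesis using xy a b by auto
    qed (use eq xy j k in \<open>auto simp: block_order_def\<close>)
  qed
  show "block_order ` block_positions S p \<subseteq> {..<dim}"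
  proof
    fix z assume "z \<in> block_order ` block_positions S p"
    then obtain j a where z: "z = block_order (j, a)" and j: "j < S" "a < p j"
      by (auto simp: block_positions_def)
    have "a \<noteq> 0 \<Longrightarrow> offset (\<lambda>j. p j - 1) j + (a - 1) < offset (\<lambda>j. p j - 1) S"
      using offset_add_less[of j S "a - 1" "\<lambda>j. p j - 1"] j by simp
    then show "z \<in> {..<dim}"
      using z j dim_eq_split by (auto simp: block_order_def)
  qed
qed (simp_all add: card_block_positions dim_def)

definition block_label :: "nat \<Rightarrow> nat \<times> nat" where
  "block_label = inv_into (block_positions S p) block_order"

lemma block_label_bij: "bij_betw block_label {..<dim} (block_positions S p)"
  unfolding block_label_def by (rule bij_betw_inv_into[OF block_order_bij])

definition split_form :: "real mat" where
  "split_form = four_block_mat B (0\<^sub>m S (dim - S)) (0\<^sub>m (dim - S) S) (diag_block_mat (map deflated [0..<S]))"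

lemma offset_deflated:
  assumes "j \<le> S"
  shows "sum_list (map dim_row (take j (map deflated [0..<S]))) = offset (\<lambda>j. p j - 1) j"
proof -
  have "take j (map deflated [0..<S]) = map deflated [0..<j]"
    using assms by (simp add: take_map)
  then have "sum_list (map dim_row (take j (map deflated [0..<S]))) = sum_list (map (\<lambda>k. p k - 1) [0..<j])"
    by (simp add: deflated_def comp_def)
  also have "\<dots> = (\<Sum>k\<in>set [0..<j]. p k - 1)"
    by (rule sum_set_upt_conv_sum_list_nat[symmetric])
  finally show ?thesis
    unfolding offset_def set_upt atLeast0LessThan .
qed

lemma diag_block_deflated_carrier:
  "diag_block_mat (map deflated [0..<S]) \<in> carrier_mat (dim - S) (dim - S)"
proof -
  have sq: "square_mat (diag_block_mat (map deflated [0..<S]))"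
    by (rule diag_block_mat_square) (auto simp: deflated_def)
  have "take S (map deflated [0..<S]) = map deflated [0..<S]"
    by (rule take_all) simp
  then have "dim_row (diag_block_mat (map deflated [0..<S]))
      = sum_list (map dim_row (take S (map deflated [0..<S])))"
    by (simp only: dim_diag_block_mat(1))
  also have "\<dots> = offset (\<lambda>j. p j - 1) S"
    by (rule offset_deflated[OF order.refl])
  also have "\<dots> = dim - S"
    using dim_eq_split by linarith
  finally have "dim_row (diag_block_mat (map deflated [0..<S])) = dim - S" .
  moreover have "dim_col (diag_block_mat (map deflated [0..<S])) = dim_row (diag_block_mat (map deflated [0..<S]))"
    using sq by (simp only: square_mat.simps)
  ultimately show ?thesis
    unfolding carrier_mat_def by simp
qed

lemma split_form_index:
  assumes x: "(j, a) \<in> block_positions S p" and y: "(k, b) \<in> block_positions S p"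
  shows "split_form $$ (block_order (j, a), block_order (k, b)) = reduced_entry (j, a) (k, b)"
proof -
  have j: "j < S" "a < p j" and k: "k < S" "b < p k" using x y by (auto simp: block_positions_def)
  have D: "diag_block_mat (map deflated [0..<S]) \<in> carrier_mat (dim - S) (dim - S)"
    by (rule diag_block_deflated_carrier)
  have off_less: "offset (\<lambda>j. p j - 1) i + (c - 1) < dim - S" if "i < S" "c < p i" "c \<noteq> 0" for i c
    using offset_add_less[of i S "c - 1" "\<lambda>j. p j - 1"] that dim_eq_split by simp
  consider "a = 0" "b = 0" | "a = 0" "b \<noteq> 0" | "a \<noteq> 0" "b = 0" | "a \<noteq> 0" "b \<noteq> 0" by blast
  then show ?thesis
  proof cases
    case 1
    then show ?thesis
      using j k B_carrier D B_diag[OF j(1)] reduced_index[OF j(1) j(2) j(2)]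
      by (auto simp: split_form_def block_order_def reduced_entry_def coupling_def)
  next
    case 2
    then show ?thesis
      using j k B_carrier D off_less[OF k] reduced_index[OF j(1) j(2)]
      by (auto simp: split_form_def block_order_def reduced_entry_def)
  next
    case 3
    then show ?thesis
      using j k B_carrier D off_less[OF j] reduced_index[OF j(1) j(2), of 0] block_dim_pos[OF j(1)]
      by (auto simp: split_form_def block_order_def reduced_entry_def)
  next
    case 4
    let ?Ds = "map deflated [0..<S]"
    have "a - 1 < dim_row (?Ds ! j)" "b - 1 < dim_row (?Ds ! k)"
      using j k 4 by (auto simp: deflated_def)
    then have "diag_block_mat ?Ds $$ (sum_list (map dim_row (take j ?Ds)) + (a - 1),
        sum_list (map dim_row (take k ?Ds)) + (b - 1)) = (if j = k then ?Ds ! j $$ (a - 1, b - 1) else 0)"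
      using j k by (intro diag_block_mat_index) (auto simp: deflated_def)
    then have "diag_block_mat ?Ds $$ (offset (\<lambda>j. p j - 1) j + (a - 1), offset (\<lambda>j. p j - 1) k + (b - 1))
        = (if j = k then deflated j $$ (a - 1, b - 1) else 0)"
      using j k by (simp only: offset_deflated less_imp_le nth_map_upt) simp
    then show ?thesis
      using 4 j k B_carrier D off_less[OF j] off_less[OF k] reduced_index[OF j(1) j(2)]
      by (auto simp: split_form_def block_order_def reduced_entry_def)
  qed
qed

lemma split_form_labelled: "split_form = labelled_mat dim block_label reduced_entry"
proof (rule eq_matI)
  fix i k assume "i < dim_row (labelled_mat dim block_label reduced_entry)"
    "k < dim_col (labelled_mat dim block_label reduced_entry)"
  then have ik: "i < dim" "k < dim" by auto
  have pos: "block_label i \<in> block_positions S p" "block_label k \<in> block_positions S p"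
    using bij_betw_apply[OF block_label_bij] ik by auto
  have "block_order (block_label i) = i" "block_order (block_label k) = k"
    using ik block_order_bij unfolding block_label_def by (auto intro: bij_betw_inv_into_right)
  then show "split_form $$ (i, k) = labelled_mat dim block_label reduced_entry $$ (i, k)"
    using split_form_index[of "fst (block_label i)" "snd (block_label i)" "fst (block_label k)" "snd (block_label k)"]
      pos ik by simp
qed (use B_carrier diag_block_deflated_carrier dim_eq_split in \<open>auto simp: split_form_def\<close>)


lemma similar_glued_split_form: "similar_mat glued split_form"
proof -
  let ?T = "labelled_mat dim label reflection_entry"
  have "similar_mat glued (labelled_mat dim label reduced_entry)"
    by (rule similar_matI[of _ _ ?T ?T dim])
      (use reflection_involution reflection_conjugates_reduced_to_glued in \<open>auto simp: glued_def\<close>)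
  moreover have "similar_mat (labelled_mat dim label reduced_entry) split_form"
    unfolding split_form_labelled by (rule similar_labelled_mat[OF label_bij block_label_bij])
  ultimately show ?thesis by (rule similar_mat_trans)
qed

lemma char_poly_glued: "char_poly glued = char_poly B * (\<Prod>j<S. char_poly (deflated j))"
proof -
  have "char_poly glued = char_poly split_form"
    by (rule char_poly_similar[OF similar_glued_split_form])
  also have "\<dots> = char_poly B * char_poly (diag_block_mat (map deflated [0..<S]))"
    unfolding split_form_def using B_carrier diag_block_deflated_carrier by (rule char_poly_four_block_diag)
  also have "char_poly (diag_block_mat (map deflated [0..<S])) = prod_list (map char_poly (map deflated [0..<S]))"
    by (rule char_poly_diag_block_mat) (auto simp: deflated_def)
  also have "\<dots> = (\<Prod>j<S. char_poly (deflated j))"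
    using prod.distinct_set_conv_list[where xs = "[0..<S]" and g = "\<lambda>j. char_poly (deflated j)"]
    unfolding set_upt atLeast0LessThan map_map comp_def by simp
  finally show ?thesis .
qed

lemma normal_glued: "normal_mat glued"
proof -
  let ?T = "labelled_mat dim label reflection_entry"
  have "square_mat (deflated j)" for j
    by (simp add: deflated_def)
  then have "normal_mat (diag_block_mat (map deflated [0..<S]))"
    using normal_deflated by (intro normal_diag_block_mat) auto
  then have "normal_mat split_form"
    unfolding split_form_def normal_four_block_diag_iff[OF B_carrier diag_block_deflated_carrier]
    using B_normal by simp
  then have "normal_mat (labelled_mat dim label reduced_entry)"
    unfolding split_form_labelled normal_labelled_mat_iff[OF label_bij] normal_labelled_mat_iff[OF block_label_bij] .
  then have "normal_mat (?T * labelled_mat dim label reduced_entry * ?T)"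
    by (intro normal_mat_conjugate[of _ dim]) (auto simp: reflection_involution transpose_reflection_labelled)
  then show ?thesis
    unfolding reflection_conjugates_reduced_to_glued .
qed

lemma nonneg_glued: "nonneg_mat glued"
  unfolding nonneg_mat_def
proof (intro allI impI)
  fix i k assume "i < dim_row glued" "k < dim_col glued"
  then have ik: "i < dim" "k < dim" by (auto simp: glued_def)
  obtain j a l b where lab: "label i = (j, a)" "label k = (l, b)" by force
  then have j: "j < S" "a < p j" and l: "l < S" "b < p l"
    using bij_betw_apply[OF label_bij] ik by (force simp: block_positions_def)+
  have A_nonneg: "0 \<le> A j $$ (a, b)" if "j = l"
    using block_nonneg[OF j(1)] block_carrier[OF j(1)] j l that unfolding nonneg_mat_def by auto
  have "0 \<le> coupling j l" if "j \<noteq> l"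
    using B_nonneg B_carrier j l that unfolding nonneg_mat_def coupling_def by auto
  then show "0 \<le> glued $$ (i, k)"
    using ik lab A_nonneg perron_vec(2)[OF j(1) j(2)] perron_vec(2)[OF l(1) l(2)] B_diag[OF j(1)]
    by (cases "j = l") (auto simp: glued_def glued_entry_def coupling_def)
qed

lemma centrosymmetric_glued: "centrosymmetric glued"
  unfolding glued_def
proof (rule centrosymmetric_labelled_mat[where \<sigma> = "\<lambda>(j, a). (j, p j - 1 - a)"])
  show "label (dim - 1 - i) = (\<lambda>(j, a). (j, p j - 1 - a)) (label i)" if "i < dim" for i
    using label_mirror[OF that] by (simp add: case_prod_beta)
  fix i k assume ik: "i < dim" "k < dim"
  obtain j a l b where lab: "label i = (j, a)" "label k = (l, b)" by force
  then have j: "j < S" "a < p j" and l: "l < S" "b < p l"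
    using bij_betw_apply[OF label_bij] ik by (force simp: block_positions_def)+
  have u_sym: "perron_vec j $ (p j - 1 - a) = perron_vec j $ a" "perron_vec l $ (p l - 1 - b) = perron_vec l $ b"
    using arg_cong[OF perron_vec(6)[OF j(1)], of "\<lambda>v. v $ a"] arg_cong[OF perron_vec(6)[OF l(1)], of "\<lambda>v. v $ b"]
      perron_vec(1)[OF j(1)] perron_vec(1)[OF l(1)] j l by auto
  have "A j $$ (p j - 1 - a, p j - 1 - b) = A j $$ (a, b)" if "j = l"
    using centrosymmetric_index[OF block_centrosymmetric[OF j(1)] block_carrier[OF j(1)] j(2)] l that by simp
  then show "glued_entry ((\<lambda>(j, a). (j, p j - 1 - a)) (label i)) ((\<lambda>(j, a). (j, p j - 1 - a)) (label k))
      = glued_entry (label i) (label k)"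
    using lab u_sym by (auto simp: glued_entry_def)
qed

lemma map_char_poly_deflated:
  assumes j: "j < S" and realizes: "realizes (complex_of_real (w j) # L) (A j)"
  shows "map_poly complex_of_real (char_poly (deflated j)) = (\<Prod>a\<leftarrow>L. [:- a, 1:])"
proof -
  interpret of_real_poly: map_poly_comm_ring_hom complex_of_real ..
  let ?lin = "\<lambda>a :: complex. [:- a, 1:]"
  have "map_poly complex_of_real [:- w j, 1:] = ?lin (complex_of_real (w j))" by simp
  then have "map_poly complex_of_real (char_poly (A j))
      = ?lin (complex_of_real (w j)) * map_poly complex_of_real (char_poly (deflated j))"
    unfolding char_poly_block[OF j] of_real_poly.hom_mult by (simp only:)
  moreover have "map_poly complex_of_real (char_poly (A j)) = (\<Prod>a\<leftarrow>complex_of_real (w j) # L. ?lin a)"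
    using realizes unfolding realizes_iff_char_poly by blast
  then have "map_poly complex_of_real (char_poly (A j)) = ?lin (complex_of_real (w j)) * (\<Prod>a\<leftarrow>L. ?lin a)"
    by (simp only: list.map prod_list.Cons)
  moreover have "?lin (complex_of_real (w j)) \<noteq> 0" by simp
  ultimately show ?thesis by (metis mult_left_cancel)
qed

lemma realizes_glued:
  assumes blocks: "\<And>j. j < S \<Longrightarrow> realizes (complex_of_real (w j) # L j) (A j)"
    and B_realizes: "realizes M B"
    and N: "mset N = mset M + (\<Sum>j<S. mset (L j))"
  shows "realizes N glued"
proof -
  interpret of_real_poly: map_poly_comm_ring_hom complex_of_real ..
  let ?lin = "\<lambda>a :: complex. [:- a, 1:]"
  have "map_poly complex_of_real (char_poly (deflated j)) = (\<Prod>a\<leftarrow>L j. ?lin a)" if "j < S" for j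
    using map_char_poly_deflated[OF that blocks[OF that]] .
  then have "map_poly complex_of_real (char_poly glued)
      = (\<Prod>a\<leftarrow>M. ?lin a) * (\<Prod>j<S. \<Prod>a\<leftarrow>L j. ?lin a)"
    using B_realizes unfolding char_poly_glued realizes_iff_char_poly
    by (simp add: of_real_poly.hom_mult of_real_poly.hom_prod)
  also have "\<dots> = (\<Prod>a\<leftarrow>N. ?lin a)"
    unfolding prod_mset_prod_list[symmetric] mset_map N image_mset_union prod_mset.union
    by (simp add: prod_mset_image_sum)
  finally have cp: "map_poly complex_of_real (char_poly glued) = (\<Prod>a\<leftarrow>N. ?lin a)" .
  have "length N = length M + (\<Sum>j<S. length (L j))"
    using arg_cong[OF N, of size] by simp
  also have "\<dots> = dim"
  proof -
    have "B \<in> carrier_mat (length M) (length M)"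
      using B_realizes unfolding realizes_def by (rule conjunct1)
    then have "length M = S"
      using B_carrier by (metis carrier_matD(1))
    moreover have "length (L j) = p j - 1" if "j < S" for j
    proof -
      have "A j \<in> carrier_mat (length (complex_of_real (w j) # L j)) (length (complex_of_real (w j) # L j))"
        using blocks[OF that] unfolding realizes_def by (rule conjunct1)
      then show ?thesis using block_carrier[OF that] by (metis carrier_matD(1) diff_Suc_1 length_Cons)
    qed
    then have "(\<Sum>j<S. length (L j)) = offset (\<lambda>j. p j - 1) S"
      unfolding offset_def by simp
    ultimately show ?thesis using dim_eq_split by simp
  qed
  finally show ?thesis
    unfolding realizes_iff_char_poly using cp by (simp add: glued_def)
qed

end

lemma mset_map_upt: "mset (map f [0..<n]) = (\<Sum>j<n. {#f j#})"
  by (induction n) auto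

theorem NCN_realizable_glue:
  fixes S :: nat and w :: "nat \<Rightarrow> real" and L :: "nat \<Rightarrow> complex list" and B :: "real mat"
  assumes at_most_one_even:
      "\<And>j k. j < S \<Longrightarrow> k < S \<Longrightarrow> even (length (L j)) \<Longrightarrow> even (length (L k)) \<Longrightarrow> j = k"
    and blocks: "\<And>j. j < S \<Longrightarrow> \<exists>A. realizes (complex_of_real (w j) # L j) A \<and> normal_mat A
      \<and> centrosymmetric A \<and> nonneg_mat A \<and> perron_root A = w j"
    and M: "length M = S" and B: "realizes M B" "normal_mat B" "nonneg_mat B"
    and B_diag: "\<And>j. j < S \<Longrightarrow> B $$ (j, j) = w j"
    and N: "mset N = mset M + (\<Sum>j<S. mset (L j))"
  shows "NCN_realizable N"
proof -
  obtain A where A: "\<And>j. j < S \<Longrightarrow> realizes (complex_of_real (w j) # L j) (A j) \<and> normal_mat (A j)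
      \<and> centrosymmetric (A j) \<and> nonneg_mat (A j) \<and> perron_root (A j) = w j"
    using blocks by metis
  interpret centrosymmetric_gluing S "\<lambda>j. Suc (length (L j))" A w B
  proof unfold_locales
    show "A j \<in> carrier_mat (Suc (length (L j))) (Suc (length (L j)))" if "j < S" for j
      using conjunct1[OF A[OF that, unfolded realizes_def]] by simp
    show "eigenvalue (A j) (w j)" if "j < S" for j
      using A[OF that] realizes_Cons_eigenvalue by blast
    show "B \<in> carrier_mat S S"
      using conjunct1[OF B(1)[unfolded realizes_def]] M by simp
  qed (use at_most_one_even A B B_diag in auto)
  have "realizes N glued"
    using realizes_glued[OF _ B(1) N] A by blast
  then show ?thesis
    unfolding NCN_realizable_def using normal_glued centrosymmetric_glued nonneg_glued by blast
qed

theorem theorem4p2: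
  fixes lam :: "complex list" and S :: nat and w :: "nat \<Rightarrow> real"
    and P :: "nat \<Rightarrow> complex list" and B :: "real mat"
  assumes n_pos: "lam \<noteq> []"
    and lam1_real: "lam ! 0 \<in> \<real>"
    and lam1_dom: "\<forall>j. 0 < j \<and> j < length lam \<longrightarrow> cmod (lam ! j) \<le> Re (lam ! 0)"
    and sum_nonneg: "0 \<le> Re (sum_list lam)"
    and conj_closed: "mset (map cnj lam) = mset lam"
    and S_pos: "0 < S" and S_le: "S \<le> length lam"
    and w_bounds: "\<forall>k<S. 0 \<le> w k \<and> w k \<le> Re (lam ! 0)"
    and part: "mset lam = (\<Sum>j<S. mset (P j))"
    and part_ne: "\<forall>j<S. P j \<noteq> []"
    and part_first: "hd (P 0) = lam ! 0"
    and odd_le1: "card {j. j < S \<and> odd (length (P j))} \<le> 1"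
    and Gamma: "\<forall>j<S. \<exists>A. realizes (complex_of_real (w j) # tl (P j)) A \<and> normal_mat A
                  \<and> centrosymmetric A \<and> nonneg_mat A \<and> perron_root A = w j"
    and B_real: "realizes (map (\<lambda>j. hd (P j)) [0..<S]) B"
    and B_normal: "normal_mat B" and B_nonneg: "nonneg_mat B"
    and B_diag: "\<forall>i<S. B $$ (i, i) = w (S - 1 - i)"
  shows "NCN_realizable lam"
proof (rule NCN_realizable_glue[where L = "\<lambda>j. tl (P (S - 1 - j))" and w = "\<lambda>j. w (S - 1 - j)"])
  show "j = k" if "j < S" "k < S" "even (length (tl (P (S - 1 - j))))" "even (length (tl (P (S - 1 - k))))"
    for j k
  proof -
    have odd: "odd (length (P (S - 1 - i)))" if "i < S" "even (length (tl (P (S - 1 - i))))" for i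
      using part_ne that by (cases "P (S - 1 - i)") auto
    have "\<forall>a\<in>{j. j < S \<and> odd (length (P j))}. \<forall>b\<in>{j. j < S \<and> odd (length (P j))}. a = b"
      using odd_le1 card_le_Suc0_iff_eq[of "{j. j < S \<and> odd (length (P j))}"] by simp
    then have "S - 1 - j = S - 1 - k"
      using odd[OF that(1,3)] odd[OF that(2,4)] that(1,2) by auto
    then show ?thesis using that by simp
  qed
  have "mset lam = (\<Sum>j<S. {#hd (P j)#} + mset (tl (P j)))"
    unfolding part using part_ne by (intro sum.cong) (auto simp: neq_Nil_conv)
  also have "\<dots> = mset (map (\<lambda>j. hd (P j)) [0..<S]) + (\<Sum>j<S. mset (tl (P j)))"
    unfolding mset_map_upt by (rule sum.distrib)
  also have "(\<Sum>j<S. mset (tl (P j))) = (\<Sum>j<S. mset (tl (P (S - 1 - j))))"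
    by (rule sum.reindex_bij_witness[where i = "\<lambda>j. S - 1 - j" and j = "\<lambda>j. S - 1 - j"]) auto
  finally show "mset lam = mset (map (\<lambda>j. hd (P j)) [0..<S]) + (\<Sum>j<S. mset (tl (P (S - 1 - j))))" .
qed (use Gamma B_real B_normal B_nonneg B_diag in auto)

end
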